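(* Let $t_0\overset{i_1}{-}t_1\overset{i_2}{-}\cdots\overset{i_k}{-}t_k$ be a path in $\mathbb T_n$ and let $h_1,\dots,h_k$ be integers. Then $$\prod_{j=1}^{k}L_j^{h_j}=\sum\ \prod_{j=1}^{k}\Bigg(\begin{Bmatrix}h_j+\sum_{l=j+1}^{k}\sum_{s=1}^{r_{(l)}}s\,n_s^l\,(\hat{\mathbf c}_l^+,-d_{(j)}\mathbf c_j)_{D_0R}\\ n_0^j,n_1^j,\dots,n_{r_{(j)}}^j\end{Bmatrix}\prod_{s=1}^{r_{(j)}}z_{i_j,s}^{n_s^j}\Bigg)\hat{\mathbf y}^{\sum_{j=1}^{k}\left(\sum_{s=1}^{r_{(j)}}s\,n_s^j\right)\mathbf c_j^+},$$ the sum taken over all tuples of nonnegative integers $(n_0^1,n_1^1,\dots,n_{r_{(1)}}^1;\dots;n_0^k,n_1^k,\dots,n_{r_{(k)}}^k)$ (as an identity of formal power series in $y_1,\dots,y_n$).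
   Context: Notation: $n\ge1$; $[b]_+=\max(b,0)$. For $h\in\mathbb Z$ and $n_0,\dots,n_l\in\mathbb Z_{\ge0}$, $\begin{Bmatrix}h\\ n_0,n_1,\dots,n_l\end{Bmatrix}:=\binom{h}{n_0}\binom{n_0}{n_1,\dots,n_l}$ with $\binom{h}{n_0}=h(h-1)\cdots(h-n_0+1)/n_0!$ and the multinomial coefficient taken to be $0$ if $n_0\ne n_1+\cdots+n_l$. $\mathbb T_n$: $n$-regular tree with edges labeled $1,\dots,n$, distinct labels at each vertex; $t\overset{k}{-}t'$ an edge labeled $k$; $t_0$ root. Positive integers $r_1,\dots,r_n$, $R=\mathrm{diag}(r_i)$. Formal variables $y_1,\dots,y_n$, $z_{i,s}$ ($1\le s\le r_i-1$), $z_{i,s}=z_{i,r_i-s}$, $z_{i,0}=z_{i,r_i}=1$. $B=(b_{ij})$ skew-symmetrizable integer $n\times n$; $\hat y_i=y_i\prod_jx_j^{b_{ji}}$ for variables $x_1,\dots,x_n$, $\hat{\mathbf y}^{\mathbf a}=\prod\hat y_i^{a_i}$. Matrices: $B_{t_0}=B$, $C_{t_0}=I_n$; for $t\overset{k}{-}t'$ ($\varepsilon=\pm1$, independent): $b_{ij;t'}=-b_{ij;t}$ if $i=k$ or $j=k$, else $b_{ij;t}+r_k([-\varepsilon b_{ik;t}]_+b_{kj;t}+b_{ik;t}[\varepsilon b_{kj;t}]_+)$; $c_{ij;t'}=-c_{ij;t}$ if $j=k$, else $c_{ij;t}+r_k(c_{ik;t}[\varepsilon b_{kj;t}]_++[-\varepsilon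 c_{ik;t}]_+b_{kj;t})$. The columns $\mathbf c_{k;t}$ of $C_t$ are sign-coherent (nonzero, entries all $\ge0$ or all $\le0$) with sign $\varepsilon_{k;t}$. Form: $D_0$ positive integer diagonal with $D_0RB$ skew-symmetric, $D_0R=\mathrm{diag}(d_1^{-1},\dots,d_n^{-1})$, $(\mathbf u,\mathbf v)_{D_0R}=\mathbf u^TD_0R\mathbf v$. Path data: $d_{(j)}=d_{i_j}$, $r_{(j)}=r_{i_j}$, $\mathbf c_j=\mathbf c_{i_j;t_{j-1}}$, $\mathbf c_j^+=\varepsilon_{i_j;t_{j-1}}\mathbf c_j$ (a nonzero nonnegative vector), $\hat{\mathbf c}_j^+=B\mathbf c_j^+$. $L_1=\sum_{s=0}^{r_{(1)}}z_{i_1,s}(\hat{\mathbf y}^{\mathbf c_1^+})^s$; for $2\le l\le k$, $L_l=\sum_{s=0}^{r_{(l)}}z_{i_l,s}\big(\hat{\mathbf y}^{\mathbf c_l^+}\prod_{j=1}^{l-1}L_j^{-(\hat{\mathbf c}_l^+,d_{(j)}\mathbf c_j)_{D_0R}}\big)^s$. Each $L_j$ is a formal power series in $y_1,\dots,y_n$ (coefficients Laurent polynomials in $x$ and polynomials in $z$) with constant term $1$, so all powers are defined. *)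

theory Defs
  imports Complex_Main "HOL-Library.Groups_Big_Fun"
begin

text \<open>A formal power series in the variables y_v (v :: 'n) with coefficients in a
commutative ring 'a is represented by its coefficient function on exponent vectors.\<close>

type_synonym ('n, 'a) mps = "('n \<Rightarrow> nat) \<Rightarrow> 'a"

definition ps_one :: "('n, 'a::comm_ring_1) mps" where
  "ps_one m = (if m = (\<lambda>_. 0) then 1 else 0)"

definition ps_mult :: "('n::finite, 'a::comm_ring_1) mps \<Rightarrow> ('n, 'a) mps \<Rightarrow> ('n, 'a) mps" where
  "ps_mult f g m = (\<Sum>p\<in>{p. \<forall>v. p v \<le> m v}. f p * g (\<lambda>v. m v - p v))"

primrec ps_pow :: "('n::finite, 'a::comm_ring_1) mps \<Rightarrow> nat \<Rightarrow> ('n, 'a) mps" where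
  "ps_pow f 0 = ps_one"
| "ps_pow f (Suc k) = ps_mult (ps_pow f k) f"

text \<open>Multiplicative inverse (unique when it exists, since the product is commutative).\<close>
definition ps_inv :: "('n::finite, 'a::comm_ring_1) mps \<Rightarrow> ('n, 'a) mps" where
  "ps_inv f = (THE g. ps_mult f g = ps_one)"

definition ps_powi :: "('n::finite, 'a::comm_ring_1) mps \<Rightarrow> int \<Rightarrow> ('n, 'a) mps" where
  "ps_powi f h = (if 0 \<le> h then ps_pow f (nat h) else ps_pow (ps_inv f) (nat (- h)))"

primrec ps_prod_upto :: "(nat \<Rightarrow> ('n::finite, 'a::comm_ring_1) mps) \<Rightarrow> nat \<Rightarrow> ('n, 'a) mps" where
  "ps_prod_upto F 0 = ps_one"
| "ps_prod_upto F (Suc k) = ps_mult (ps_prod_upto F k) (F (Suc k))"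

text \<open>x_j^e for an integer e, where xi j is the inverse of x j.\<close>
definition xpow :: "('n \<Rightarrow> 'a::comm_ring_1) \<Rightarrow> ('n \<Rightarrow> 'a) \<Rightarrow> 'n \<Rightarrow> int \<Rightarrow> 'a" where
  "xpow x xi j e = (if 0 \<le> e then x j ^ nat e else xi j ^ nat (- e))"

definition xmon :: "('n::finite \<Rightarrow> 'a::comm_ring_1) \<Rightarrow> ('n \<Rightarrow> 'a) \<Rightarrow> ('n \<Rightarrow> int) \<Rightarrow> 'a" where
  "xmon x xi e = (\<Prod>j\<in>UNIV. xpow x xi j (e j))"

text \<open>yhat^a = prod_i (y_i prod_j x_j^(b_ji))^(a_i) = y^a x^(B a), for a nonnegative vector a.\<close>
definition yhat :: "('n::finite \<Rightarrow> 'n \<Rightarrow> int) \<Rightarrow> ('n \<Rightarrow> 'a::comm_ring_1) \<Rightarrow> ('n \<Rightarrow> 'a)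
                    \<Rightarrow> ('n \<Rightarrow> nat) \<Rightarrow> ('n, 'a) mps" where
  "yhat B x xi a m = (if m = a then xmon x xi (\<lambda>j. \<Sum>i\<in>UNIV. B j i * int (a i)) else 0)"

definition posp :: "int \<Rightarrow> int" where "posp b = max b 0"

text \<open>Mutation in direction k with sign \<epsilon> (the result does not depend on \<epsilon>; we use \<epsilon> = 1).\<close>
definition mut_B :: "('n \<Rightarrow> nat) \<Rightarrow> int \<Rightarrow> 'n \<Rightarrow> ('n \<Rightarrow> 'n \<Rightarrow> int) \<Rightarrow> ('n \<Rightarrow> 'n \<Rightarrow> int)" where
  "mut_B r \<epsilon> k Bm i j =
     (if i = k \<or> j = k then - Bm i j
      else Bm i j + int (r k) * (posp (- \<epsilon> * Bm i k) * Bm k j + Bm i k * posp (\<epsilon> * Bm k j)))"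

definition mut_C :: "('n \<Rightarrow> nat) \<Rightarrow> int \<Rightarrow> 'n \<Rightarrow> ('n \<Rightarrow> 'n \<Rightarrow> int) \<Rightarrow> ('n \<Rightarrow> 'n \<Rightarrow> int)
                      \<Rightarrow> ('n \<Rightarrow> 'n \<Rightarrow> int)" where
  "mut_C r \<epsilon> k Bm Cm i j =
     (if j = k then - Cm i j
      else Cm i j + int (r k) * (Cm i k * posp (\<epsilon> * Bm k j) + posp (- \<epsilon> * Cm i k) * Bm k j))"

text \<open>(B_{t_j}, C_{t_j}) along the path t_0 -i_1- t_1 -i_2- ... (the label of the j-th edge is ii j).\<close>
primrec BC_path :: "('n \<Rightarrow> nat) \<Rightarrow> ('n \<Rightarrow> 'n \<Rightarrow> int) \<Rightarrow> (nat \<Rightarrow> 'n) \<Rightarrow> nat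
                    \<Rightarrow> ('n \<Rightarrow> 'n \<Rightarrow> int) \<times> ('n \<Rightarrow> 'n \<Rightarrow> int)" where
  "BC_path r B ii 0 = (B, (\<lambda>i j. if i = j then 1 else 0))"
| "BC_path r B ii (Suc j) =
     (let (Bm, Cm) = BC_path r B ii j
      in (mut_B r 1 (ii (Suc j)) Bm, mut_C r 1 (ii (Suc j)) Bm Cm))"

text \<open>c_j = c_{i_j; t_{j-1}} (for j \<ge> 1).\<close>
definition cvec :: "('n \<Rightarrow> nat) \<Rightarrow> ('n \<Rightarrow> 'n \<Rightarrow> int) \<Rightarrow> (nat \<Rightarrow> 'n) \<Rightarrow> nat \<Rightarrow> ('n \<Rightarrow> int)" where
  "cvec r B ii j = (\<lambda>m. snd (BC_path r B ii (j - 1)) m (ii j))"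

definition sign_coherent :: "('n \<Rightarrow> int) \<Rightarrow> bool" where
  "sign_coherent c \<longleftrightarrow> c \<noteq> (\<lambda>_. 0) \<and> ((\<forall>m. 0 \<le> c m) \<or> (\<forall>m. c m \<le> 0))"

definition sgn_vec :: "('n \<Rightarrow> int) \<Rightarrow> int" where
  "sgn_vec c = (if \<forall>m. 0 \<le> c m then 1 else -1)"

definition cplus :: "('n \<Rightarrow> nat) \<Rightarrow> ('n \<Rightarrow> 'n \<Rightarrow> int) \<Rightarrow> (nat \<Rightarrow> 'n) \<Rightarrow> nat \<Rightarrow> ('n \<Rightarrow> int)" where
  "cplus r B ii j = (\<lambda>m. sgn_vec (cvec r B ii j) * cvec r B ii j m)"

definition form_D0R :: "('n::finite \<Rightarrow> int) \<Rightarrow> ('n \<Rightarrow> nat) \<Rightarrow> ('n \<Rightarrow> rat) \<Rightarrow> ('n \<Rightarrow> rat) \<Rightarrow> rat" where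
  "form_D0R D0 r u v = (\<Sum>m\<in>UNIV. u m * of_int (D0 m * int (r m)) * v m)"

text \<open>d_i with D_0 R = diag(d_1^{-1}, ..., d_n^{-1}).\<close>
definition dd :: "('n \<Rightarrow> int) \<Rightarrow> ('n \<Rightarrow> nat) \<Rightarrow> 'n \<Rightarrow> rat" where
  "dd D0 r i = 1 / of_int (D0 i * int (r i))"

text \<open>Q l j = (chat_l^+, d_(j) c_j)_{D_0 R}, where chat_l^+ = B c_l^+.\<close>
definition Qpair :: "('n::finite \<Rightarrow> int) \<Rightarrow> ('n \<Rightarrow> nat) \<Rightarrow> ('n \<Rightarrow> 'n \<Rightarrow> int) \<Rightarrow> (nat \<Rightarrow> 'n)
                     \<Rightarrow> nat \<Rightarrow> nat \<Rightarrow> rat" where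
  "Qpair D0 r B ii l j =
     form_D0R D0 r (\<lambda>m. of_int (\<Sum>q\<in>UNIV. B m q * cplus r B ii l q))
                   (\<lambda>m. dd D0 r (ii j) * of_int (cvec r B ii j m))"

text \<open>The same pairing as an integer (it is an integer; see the hypothesis of the theorem).\<close>
definition Eint :: "('n::finite \<Rightarrow> int) \<Rightarrow> ('n \<Rightarrow> nat) \<Rightarrow> ('n \<Rightarrow> 'n \<Rightarrow> int) \<Rightarrow> (nat \<Rightarrow> 'n)
                     \<Rightarrow> nat \<Rightarrow> nat \<Rightarrow> int" where
  "Eint D0 r B ii l j = \<lfloor>Qpair D0 r B ii l j\<rfloor>"

text \<open>Lfam ... l j = L_j for 1 \<le> j \<le> l. L_l = sum_{s=0}^{r_(l)} z_{i_l,s} w_l^s with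
  w_l = yhat^{c_l^+} prod_{j<l} L_j^{-(chat_l^+, d_(j) c_j)}.\<close>
primrec Lfam :: "('n::finite \<Rightarrow> int) \<Rightarrow> ('n \<Rightarrow> nat) \<Rightarrow> ('n \<Rightarrow> 'n \<Rightarrow> int) \<Rightarrow> (nat \<Rightarrow> 'n)
                 \<Rightarrow> ('n \<Rightarrow> 'a::comm_ring_1) \<Rightarrow> ('n \<Rightarrow> 'a) \<Rightarrow> ('n \<Rightarrow> nat \<Rightarrow> 'a)
                 \<Rightarrow> nat \<Rightarrow> nat \<Rightarrow> ('n, 'a) mps" where
  "Lfam D0 r B ii x xi z 0 = (\<lambda>_. ps_one)"
| "Lfam D0 r B ii x xi z (Suc l) =
     (let prev = Lfam D0 r B ii x xi z l;
          w = ps_mult (yhat B x xi (\<lambda>m. nat (cplus r B ii (Suc l) m)))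
                      (ps_prod_upto (\<lambda>j. ps_powi (prev j) (- Eint D0 r B ii (Suc l) j)) l)
      in prev(Suc l := (\<lambda>mm. \<Sum>s\<in>{0..r (ii (Suc l))}. z (ii (Suc l)) s * ps_pow w s mm)))"

definition Lser :: "('n::finite \<Rightarrow> int) \<Rightarrow> ('n \<Rightarrow> nat) \<Rightarrow> ('n \<Rightarrow> 'n \<Rightarrow> int) \<Rightarrow> (nat \<Rightarrow> 'n)
                 \<Rightarrow> ('n \<Rightarrow> 'a::comm_ring_1) \<Rightarrow> ('n \<Rightarrow> 'a) \<Rightarrow> ('n \<Rightarrow> nat \<Rightarrow> 'a)
                 \<Rightarrow> nat \<Rightarrow> ('n, 'a) mps" where
  "Lser D0 r B ii x xi z j = Lfam D0 r B ii x xi z j j"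

definition multinom :: "nat \<Rightarrow> (nat \<Rightarrow> nat) \<Rightarrow> nat \<Rightarrow> int" where
  "multinom n0 ns rr =
     (if n0 = (\<Sum>s=1..rr. ns s) then int (fact n0 div (\<Prod>s=1..rr. fact (ns s))) else 0)"

text \<open>{h ; n_0, n_1, ..., n_rr} = binom(h, n_0) = h(h-1)...(h-n_0+1)/n_0! (exact division) * multinom(n_0; n_1, ..., n_rr).\<close>
definition gbin :: "int \<Rightarrow> nat \<Rightarrow> (nat \<Rightarrow> nat) \<Rightarrow> nat \<Rightarrow> int" where
  "gbin h n0 ns rr = ((\<Prod>i<n0. h - int i) div fact n0) * multinom n0 ns rr"

text \<open>Index set of tuples (n^j_s)_{1\<le>j\<le>k, 0\<le>s\<le>r_(j)}, encoded as functions nat \<Rightarrow> nat \<Rightarrow> nat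
  vanishing outside the index range.\<close>
definition tuples :: "('n \<Rightarrow> nat) \<Rightarrow> (nat \<Rightarrow> 'n) \<Rightarrow> nat \<Rightarrow> (nat \<Rightarrow> nat \<Rightarrow> nat) set" where
  "tuples r ii k = {nn. \<forall>j s. (j < 1 \<or> k < j \<or> r (ii j) < s) \<longrightarrow> nn j s = 0}"

definition rhs_term :: "('n::finite \<Rightarrow> int) \<Rightarrow> ('n \<Rightarrow> nat) \<Rightarrow> ('n \<Rightarrow> 'n \<Rightarrow> int) \<Rightarrow> (nat \<Rightarrow> 'n)
                 \<Rightarrow> ('n \<Rightarrow> 'a::comm_ring_1) \<Rightarrow> ('n \<Rightarrow> 'a) \<Rightarrow> ('n \<Rightarrow> nat \<Rightarrow> 'a)
                 \<Rightarrow> nat \<Rightarrow> (nat \<Rightarrow> int) \<Rightarrow> (nat \<Rightarrow> nat \<Rightarrow> nat) \<Rightarrow> ('n, 'a) mps" where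
  "rhs_term D0 r B ii x xi z k h nn mm =
     (\<Prod>j=1..k.
        of_int (gbin (h j + (\<Sum>l=j+1..k. \<Sum>s=1..r (ii l).
                                int s * int (nn l s) * (- Eint D0 r B ii l j)))
                     (nn j 0) (nn j) (r (ii j)))
        * (\<Prod>s=1..r (ii j). z (ii j) s ^ nn j s))
     * yhat B x xi (\<lambda>m. \<Sum>j=1..k. (\<Sum>s=1..r (ii j). s * nn j s) * nat (cplus r B ii j m)) mm"

end

theory Submission
  imports Defs "HOL-Library.FuncSet" "HOL-Library.Function_Algebras"
    "HOL-Computational_Algebra.Formal_Power_Series"
begin

text \<open>For a series X
  without constant term, the sum of (h gchoose n) X^n over all n is a well-defined (1 + X)^h,
  multiplicative in h by Vandermonde's identity; this gives the integer powers of the L_j.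
  Each L_(k+1) is a polynomial in w = yhat^(c_(k+1)^+) * prod_(j<=k) L_j^(-e_j), where
  e_j = (chat_(k+1)^+, d_(j) c_j), and w has no constant term because c_(k+1) is sign-coherent.
  The binomial and multinomial theorems expand L_(k+1)^h as a sum over tuples (n_0, ..., n_r) of
  {h; n_0, ..., n_r} prod_s z_s^(n_s) w^N with N = sum_s s n_s, and in w^N the factor
  prod_j L_j^(-N e_j) merely shifts the exponents of L_1, ..., L_k. Induction on k, with the
  exponents generalised, yields the formula. The identity is formal: besides sign-coherence it only
  uses x_j xi_j = 1 and z_(i,0) = 1.\<close>

section \<open>Multivariate formal power series\<close>

typedef ('n, 'a) mfps = "UNIV :: (('n \<Rightarrow> nat) \<Rightarrow> 'a) set"
  morphisms mfps_nth Abs_mfps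
  by auto

lemma mfps_nth_Abs_mfps [simp]: "mfps_nth (Abs_mfps f) = f"
  by (simp add: Abs_mfps_inverse)

lemma mfps_eqI: "(\<And>m. mfps_nth f m = mfps_nth g m) \<Longrightarrow> f = g"
  by (metis mfps_nth_inject ext)

lemma finite_atMost_fun: "finite {..m :: 'n::finite \<Rightarrow> nat}"
proof -
  have "{..m} = PiE UNIV (\<lambda>v. {..m v})"
    by (auto simp: le_fun_def PiE_def extensional_def Pi_def)
  then show ?thesis by (auto intro!: finite_PiE)
qed

lemma ps_mult_atMost: "ps_mult f g m = (\<Sum>p\<in>{..m}. f p * g (m - p))"
  by (simp add: ps_mult_def le_fun_def fun_diff_def atMost_def)

lemma ps_mult_commute: "ps_mult f g = (ps_mult g f :: ('n::finite, 'a::comm_ring_1) mps)"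
proof
  fix m
  show "ps_mult f g m = ps_mult g f m"
    unfolding ps_mult_atMost
    by (rule sum.reindex_bij_witness[of _ "\<lambda>p. m - p" "\<lambda>p. m - p"])
       (auto simp: le_fun_def fun_diff_def mult.commute)
qed

lemma ps_mult_assoc:
  "ps_mult (ps_mult f g) h = ps_mult f (ps_mult g h :: ('n::finite, 'a::comm_ring_1) mps)"
proof
  fix m
  have "ps_mult (ps_mult f g) h m
      = (\<Sum>p\<in>{..m}. \<Sum>q\<in>{q \<in> {..m}. q \<le> p}. f q * g (p - q) * h (m - p))"
    unfolding ps_mult_atMost sum_distrib_right
    by (intro sum.cong) (auto intro: order_trans)
  also have "\<dots> = (\<Sum>q\<in>{..m}. \<Sum>p\<in>{p \<in> {..m}. q \<le> p}. f q * g (p - q) * h (m - p))"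
    by (rule sum.swap_restrict) (auto simp: finite_atMost_fun)
  also have "\<dots> = (\<Sum>q\<in>{..m}. \<Sum>u\<in>{..m - q}. f q * (g u * h (m - q - u)))"
  proof (rule sum.cong[OF refl])
    fix q assume "q \<in> {..m}"
    then show "(\<Sum>p\<in>{p \<in> {..m}. q \<le> p}. f q * g (p - q) * h (m - p))
        = (\<Sum>u\<in>{..m - q}. f q * (g u * h (m - q - u)))"
      by (intro sum.reindex_bij_witness[of _ "\<lambda>u. q + u" "\<lambda>p. p - q"])
         (auto simp: le_fun_def fun_diff_def fun_eq_iff mult.assoc diff_le_mono le_diff_conv2 add.commute)
  qed
  also have "\<dots> = ps_mult f (ps_mult g h) m"
    by (simp add: ps_mult_atMost sum_distrib_left)
  finally show "ps_mult (ps_mult f g) h m = ps_mult f (ps_mult g h) m" .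
qed

lemma ps_mult_ps_one: "ps_mult ps_one f = (f :: ('n::finite, 'a::comm_ring_1) mps)"
proof
  fix m
  have "ps_mult ps_one f m = (\<Sum>p\<in>{..m}. if p = 0 then f m else 0)"
    unfolding ps_mult_atMost ps_one_def by (rule sum.cong) (auto simp: fun_diff_def)
  also have "\<dots> = f m"
    by (simp add: finite_atMost_fun zero_fun_def[symmetric])
  finally show "ps_mult ps_one f m = f m" .
qed

lemma ps_mult_add_left: "ps_mult (\<lambda>m. f m + g m) h = (\<lambda>m. ps_mult f h m + ps_mult g h m)"
  by (auto simp: ps_mult_def distrib_right sum.distrib)

instantiation mfps :: (finite, comm_ring_1) comm_ring_1
begin

definition "0 = Abs_mfps (\<lambda>_. 0)"
definition "1 = Abs_mfps ps_one"
definition "f + g = Abs_mfps (\<lambda>m. mfps_nth f m + mfps_nth g m)"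
definition "f - g = Abs_mfps (\<lambda>m. mfps_nth f m - mfps_nth g m)"
definition "- f = Abs_mfps (\<lambda>m. - mfps_nth f m)"
definition "f * g = Abs_mfps (ps_mult (mfps_nth f) (mfps_nth g))"

instance
proof
  fix a b c :: "('a, 'b) mfps"
  show "a * b * c = a * (b * c)" by (simp add: times_mfps_def ps_mult_assoc)
  show "a * b = b * a" by (simp add: times_mfps_def ps_mult_commute)
  show "1 * a = a" by (simp add: times_mfps_def one_mfps_def ps_mult_ps_one mfps_nth_inverse)
  show "(a + b) * c = a * c + b * c" by (simp add: times_mfps_def plus_mfps_def ps_mult_add_left)
  show "a + b + c = a + (b + c)" by (rule mfps_eqI) (simp add: plus_mfps_def add.assoc)
  show "a + b = b + a" by (rule mfps_eqI) (simp add: plus_mfps_def add.commute)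
  show "0 + a = a" by (rule mfps_eqI) (simp add: plus_mfps_def zero_mfps_def)
  show "- a + a = 0" by (rule mfps_eqI) (simp add: plus_mfps_def zero_mfps_def uminus_mfps_def)
  show "a - b = a + - b" by (rule mfps_eqI) (simp add: plus_mfps_def minus_mfps_def uminus_mfps_def)
  show "(0 :: ('a, 'b) mfps) \<noteq> 1"
    by (metis mfps_nth_Abs_mfps one_mfps_def zero_mfps_def ps_one_def zero_neq_one)
qed

end

lemma atMost_zero_fun: "{..0 :: 'n \<Rightarrow> nat} = {0}"
  by (auto simp: le_fun_def fun_eq_iff)

lemma mfps_nth_zero [simp]: "mfps_nth (0 :: ('n::finite, 'a::comm_ring_1) mfps) m = 0"
  by (simp add: zero_mfps_def)

lemma mfps_nth_one: "mfps_nth (1 :: ('n::finite, 'a::comm_ring_1) mfps) = ps_one"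
  by (simp add: one_mfps_def)

lemma mfps_nth_one_apply: "mfps_nth (1 :: ('n::finite, 'a::comm_ring_1) mfps) m = (if m = 0 then 1 else 0)"
  by (simp add: one_mfps_def ps_one_def zero_fun_def)

lemma mfps_nth_add [simp]:
  "mfps_nth (f + g :: ('n::finite, 'a::comm_ring_1) mfps) m = mfps_nth f m + mfps_nth g m"
  by (simp add: plus_mfps_def)

lemma mfps_nth_diff [simp]:
  "mfps_nth (f - g :: ('n::finite, 'a::comm_ring_1) mfps) m = mfps_nth f m - mfps_nth g m"
  by (simp add: minus_mfps_def)

lemma mfps_nth_mult:
  "mfps_nth (f * g :: ('n::finite, 'a::comm_ring_1) mfps) = ps_mult (mfps_nth f) (mfps_nth g)"
  by (simp add: times_mfps_def)

lemma mfps_nth_mult_0: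
  "mfps_nth (f * g :: ('n::finite, 'a::comm_ring_1) mfps) 0 = mfps_nth f 0 * mfps_nth g 0"
  by (simp add: mfps_nth_mult ps_mult_atMost atMost_zero_fun)

lemma mfps_nth_power_0:
  "mfps_nth (f ^ n :: ('n::finite, 'a::comm_ring_1) mfps) 0 = mfps_nth f 0 ^ n"
  by (induction n) (simp_all add: mfps_nth_one_apply mfps_nth_mult_0 zero_fun_def[symmetric])

lemma mfps_nth_sum: "mfps_nth (\<Sum>i\<in>A. F i :: ('n::finite, 'a::comm_ring_1) mfps) m = (\<Sum>i\<in>A. mfps_nth (F i) m)"
  by (induction A rule: infinite_finite_induct) auto

lemma ps_pow_eq: "ps_pow f n = mfps_nth (Abs_mfps f ^ n :: ('n::finite, 'a::comm_ring_1) mfps)"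
  by (induction n) (simp_all add: mfps_nth_one mfps_nth_mult power_Suc2 del: power_Suc)

lemma ps_prod_upto_eq:
  "ps_prod_upto F k = mfps_nth (\<Prod>j=1..k. Abs_mfps (F j) :: ('n::finite, 'a::comm_ring_1) mfps)"
proof (induction k)
  case 0
  then show ?case by (simp add: mfps_nth_one)
next
  case (Suc k)
  then show ?case by (simp add: mfps_nth_mult ps_mult_commute)
qed

lemma ps_prod_upto_cong:
  "(\<And>j. 1 \<le> j \<Longrightarrow> j \<le> k \<Longrightarrow> F j = G j) \<Longrightarrow> ps_prod_upto F k = ps_prod_upto G k"
  by (induction k) auto

definition mfps_const :: "'a \<Rightarrow> ('n::finite, 'a::comm_ring_1) mfps" where
  "mfps_const c = Abs_mfps (\<lambda>m. if m = 0 then c else 0)"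

lemma mfps_nth_const: "mfps_nth (mfps_const c) m = (if m = 0 then c else 0)"
  by (simp add: mfps_const_def)

lemma mfps_nth_const_mult [simp]: "mfps_nth (mfps_const c * f) m = c * mfps_nth f m"
proof -
  have "mfps_nth (mfps_const c * f) m = (\<Sum>p\<in>{..m}. if p = 0 then c * mfps_nth f m else 0)"
    unfolding mfps_nth_mult ps_mult_atMost mfps_nth_const
    by (rule sum.cong) (auto simp: fun_diff_def)
  then show ?thesis by (simp add: finite_atMost_fun)
qed

lemma mfps_const_1 [simp]: "mfps_const 1 = 1"
  by (rule mfps_eqI) (simp add: mfps_const_def mfps_nth_one_apply)

lemma mfps_const_0 [simp]: "mfps_const 0 = 0"
  by (rule mfps_eqI) (simp add: mfps_const_def)

lemma mfps_const_mult: "mfps_const (a * b) = (mfps_const a * mfps_const b :: ('n::finite, 'a::comm_ring_1) mfps)"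
  by (rule mfps_eqI) (simp only: mfps_nth_const_mult, simp add: mfps_nth_const)

lemma mfps_const_add: "mfps_const (a + b) = (mfps_const a + mfps_const b :: ('n::finite, 'a::comm_ring_1) mfps)"
  by (rule mfps_eqI) (simp add: mfps_nth_const)

lemma mfps_const_of_nat: "mfps_const (of_nat k) = (of_nat k :: ('n::finite, 'a::comm_ring_1) mfps)"
  by (induction k) (simp_all add: mfps_const_add)

lemma mfps_const_sum: "mfps_const (\<Sum>i\<in>A. f i) = (\<Sum>i\<in>A. mfps_const (f i) :: ('n::finite, 'a::comm_ring_1) mfps)"
  by (induction A rule: infinite_finite_induct) (simp_all add: mfps_const_add)

lemma mfps_const_prod: "mfps_const (\<Prod>i\<in>A. f i) = (\<Prod>i\<in>A. mfps_const (f i) :: ('n::finite, 'a::comm_ring_1) mfps)"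
  by (induction A rule: infinite_finite_induct) (simp_all add: mfps_const_mult)

lemma mfps_const_power: "mfps_const (a ^ n) = (mfps_const a ^ n :: ('n::finite, 'a::comm_ring_1) mfps)"
  by (induction n) (simp_all add: mfps_const_mult)

definition total_deg :: "('n::finite \<Rightarrow> nat) \<Rightarrow> nat" where
  "total_deg m = (\<Sum>v\<in>UNIV. m v)"

lemma total_deg_diff: "p \<le> m \<Longrightarrow> total_deg m = total_deg p + total_deg (m - p)"
  by (auto simp: total_deg_def le_fun_def sum.distrib[symmetric] intro!: sum.cong)

lemma total_deg_pos: "m \<noteq> 0 \<Longrightarrow> 0 < total_deg m"
  by (auto simp: total_deg_def zero_fun_def)

lemma le_total_deg_if_mfps_nth_power_nonzero:
  fixes X :: "('n::finite, 'a::comm_ring_1) mfps"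
  assumes X0: "mfps_nth X 0 = 0" and nz: "mfps_nth (X ^ n) m \<noteq> 0"
  shows "n \<le> total_deg m"
  using nz
proof (induction n arbitrary: m)
  case 0
  then show ?case by simp
next
  case (Suc n)
  have "ps_mult (mfps_nth (X ^ n)) (mfps_nth X) m \<noteq> 0"
    using Suc.prems by (simp add: power_Suc2 mfps_nth_mult del: power_Suc)
  then obtain p where p: "p \<le> m" "mfps_nth (X ^ n) p \<noteq> 0" "mfps_nth X (m - p) \<noteq> 0"
    unfolding ps_mult_atMost by (metis (no_types, lifting) atMost_iff mult_not_zero sum.neutral)
  from p(3) X0 have "0 < total_deg (m - p)"
    by (intro total_deg_pos) auto
  moreover have "n \<le> total_deg p" using Suc.IH p(2) by blast
  ultimately show ?case using total_deg_diff[OF p(1)] by linarith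
qed

section \<open>Summable families\<close>

definition mfps_summable :: "'i set \<Rightarrow> ('i \<Rightarrow> ('n, 'a::zero) mfps) \<Rightarrow> bool" where
  "mfps_summable A F \<longleftrightarrow> (\<forall>m. finite {i\<in>A. mfps_nth (F i) m \<noteq> 0})"

definition mfps_sum :: "'i set \<Rightarrow> ('i \<Rightarrow> ('n, 'a::comm_monoid_add) mfps) \<Rightarrow> ('n, 'a) mfps" where
  "mfps_sum A F = Abs_mfps (\<lambda>m. \<Sum>i\<in>{i\<in>A. mfps_nth (F i) m \<noteq> 0}. mfps_nth (F i) m)"

lemma mfps_nth_mfps_sum:
  assumes "finite T" "{i\<in>A. mfps_nth (F i) m \<noteq> 0} \<subseteq> T" "T \<subseteq> A"
  shows "mfps_nth (mfps_sum A F) m = (\<Sum>i\<in>T. mfps_nth (F i) m)"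
  unfolding mfps_sum_def mfps_nth_Abs_mfps
  by (rule sum.mono_neutral_left) (use assms in auto)

lemma mfps_sum_cong: "(\<And>i. i \<in> A \<Longrightarrow> F i = G i) \<Longrightarrow> mfps_sum A F = mfps_sum A G"
  unfolding mfps_sum_def by (rule arg_cong[where f = Abs_mfps], rule ext, rule sum.cong) auto

lemma mfps_sum_finite:
  "finite A \<Longrightarrow> mfps_sum A F = (\<Sum>i\<in>A. F i :: ('n::finite, 'a::comm_ring_1) mfps)"
  by (rule mfps_eqI) (subst mfps_nth_mfps_sum[of A], auto simp: mfps_nth_sum)

lemma mfps_nth_mfps_sum_Sum_any:
  "mfps_nth (mfps_sum A F) m = Sum_any (\<lambda>i. if i \<in> A then mfps_nth (F i) m else 0)"
proof -
  have "{i. (if i \<in> A then mfps_nth (F i) m else 0) \<noteq> 0} = {i \<in> A. mfps_nth (F i) m \<noteq> 0}"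
    by auto
  then show ?thesis
    by (simp add: mfps_sum_def Sum_any.expand_set)
qed

lemma support_mult_right_subset:
  "{i\<in>A. mfps_nth (F i * G) m \<noteq> 0} \<subseteq> (\<Union>p\<in>{..m}. {i\<in>A. mfps_nth (F i) p \<noteq> 0})"
  for F :: "'i \<Rightarrow> ('n::finite, 'a::comm_ring_1) mfps"
proof
  fix i assume "i \<in> {i\<in>A. mfps_nth (F i * G) m \<noteq> 0}"
  then have "i \<in> A" "(\<Sum>p\<in>{..m}. mfps_nth (F i) p * mfps_nth G (m - p)) \<noteq> 0"
    by (auto simp: mfps_nth_mult ps_mult_atMost)
  then obtain p where "p \<le> m" "mfps_nth (F i) p \<noteq> 0"
    by (metis (no_types, lifting) atMost_iff mult_not_zero sum.neutral)
  with \<open>i \<in> A\<close> show "i \<in> (\<Union>p\<in>{..m}. {i\<in>A. mfps_nth (F i) p \<noteq> 0})" by auto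
qed

lemma mfps_sum_mult_right:
  fixes F :: "'i \<Rightarrow> ('n::finite, 'a::comm_ring_1) mfps"
  assumes "mfps_summable A F"
  shows "mfps_sum A F * G = mfps_sum A (\<lambda>i. F i * G)"
proof (rule mfps_eqI)
  fix m
  define T where "T = (\<Union>p\<in>{..m}. {i\<in>A. mfps_nth (F i) p \<noteq> 0})"
  have T: "finite T" "T \<subseteq> A"
    using assms by (auto simp: T_def mfps_summable_def finite_atMost_fun)
  have "mfps_nth (mfps_sum A F * G) m
      = (\<Sum>p\<in>{..m}. mfps_nth (mfps_sum A F) p * mfps_nth G (m - p))"
    by (simp add: mfps_nth_mult ps_mult_atMost)
  also have "\<dots> = (\<Sum>p\<in>{..m}. (\<Sum>i\<in>T. mfps_nth (F i) p) * mfps_nth G (m - p))"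
    by (intro sum.cong refl arg_cong2[where f = "(*)"] mfps_nth_mfps_sum T)
       (auto simp: T_def)
  also have "\<dots> = (\<Sum>i\<in>T. mfps_nth (F i * G) m)"
    by (simp add: mfps_nth_mult ps_mult_atMost sum_distrib_right) (rule sum.swap)
  also have "\<dots> = mfps_nth (mfps_sum A (\<lambda>i. F i * G)) m"
    using support_mult_right_subset[of A F G m] T
    by (intro mfps_nth_mfps_sum[symmetric]) (auto simp: T_def)
  finally show "mfps_nth (mfps_sum A F * G) m = mfps_nth (mfps_sum A (\<lambda>i. F i * G)) m" .
qed

lemma mfps_sum_mult_left:
  fixes F :: "'i \<Rightarrow> ('n::finite, 'a::comm_ring_1) mfps"
  shows "mfps_summable A F \<Longrightarrow> G * mfps_sum A F = mfps_sum A (\<lambda>i. G * F i)"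
  using mfps_sum_mult_right[of A F G] by (simp add: mult.commute)

lemma mfps_sum_Sigma:
  fixes F :: "'i \<Rightarrow> 'j \<Rightarrow> ('n::finite, 'a::comm_ring_1) mfps"
  assumes summable: "mfps_summable (Sigma A B) (\<lambda>(i, j). F i j)"
  shows "mfps_sum (Sigma A B) (\<lambda>(i, j). F i j) = mfps_sum A (\<lambda>i. mfps_sum (B i) (F i))"
proof (rule mfps_eqI)
  fix m
  define S where "S = {x \<in> Sigma A B. mfps_nth (case x of (i, j) \<Rightarrow> F i j) m \<noteq> 0}"
  have S: "finite S" using summable by (simp add: mfps_summable_def S_def)
  have fin_row: "finite {j. (i, j) \<in> S}" for i
    by (rule finite_subset[of _ "snd ` S"]) (force, simp add: S)
  have row: "mfps_nth (mfps_sum (B i) (F i)) m = (\<Sum>j\<in>{j. (i, j) \<in> S}. mfps_nth (F i j) m)"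
    if "i \<in> A" for i
  proof (rule mfps_nth_mfps_sum)
    show "{j \<in> B i. mfps_nth (F i j) m \<noteq> 0} \<subseteq> {j. (i, j) \<in> S}" "{j. (i, j) \<in> S} \<subseteq> B i"
      using that by (auto simp: S_def)
  qed (rule fin_row)
  have outer: "{i \<in> A. mfps_nth (mfps_sum (B i) (F i)) m \<noteq> 0} \<subseteq> fst ` S"
  proof
    fix i assume i: "i \<in> {i \<in> A. mfps_nth (mfps_sum (B i) (F i)) m \<noteq> 0}"
    then have "(\<Sum>j\<in>{j. (i, j) \<in> S}. mfps_nth (F i j) m) \<noteq> 0" using row by auto
    then obtain j where "(i, j) \<in> S" by (metis (no_types, lifting) empty_Collect_eq sum.empty)
    then show "i \<in> fst ` S" by force
  qed
  have "mfps_nth (mfps_sum A (\<lambda>i. mfps_sum (B i) (F i))) m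
      = (\<Sum>i\<in>fst ` S. mfps_nth (mfps_sum (B i) (F i)) m)"
    using S outer by (intro mfps_nth_mfps_sum) (auto simp: S_def)
  also have "\<dots> = (\<Sum>i\<in>fst ` S. \<Sum>j\<in>{j. (i, j) \<in> S}. mfps_nth (F i j) m)"
    using row by (intro sum.cong) (auto simp: S_def)
  also have "\<dots> = (\<Sum>(i, j)\<in>Sigma (fst ` S) (\<lambda>i. {j. (i, j) \<in> S}). mfps_nth (F i j) m)"
    using S fin_row by (subst sum.Sigma) auto
  also have "Sigma (fst ` S) (\<lambda>i. {j. (i, j) \<in> S}) = S" by force
  also have "(\<Sum>(i, j)\<in>S. mfps_nth (F i j) m) = mfps_nth (mfps_sum (Sigma A B) (\<lambda>(i, j). F i j)) m"
    using S by (subst mfps_nth_mfps_sum[of S]) (auto simp: S_def split_beta)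
  finally show "mfps_nth (mfps_sum (Sigma A B) (\<lambda>(i, j). F i j)) m
      = mfps_nth (mfps_sum A (\<lambda>i. mfps_sum (B i) (F i))) m" ..
qed

lemma
  fixes F :: "'i \<Rightarrow> ('n::finite, 'a::comm_ring_1) mfps"
  assumes bij: "bij_betw g A' A" and FG: "\<And>i. i \<in> A' \<Longrightarrow> F (g i) = G i"
  shows mfps_sum_reindex_bij_betw: "mfps_sum A' G = mfps_sum A F"
    and mfps_summable_reindex_bij_betw: "mfps_summable A' G = mfps_summable A F"
proof -
  have supp: "{i\<in>A. mfps_nth (F i) m \<noteq> 0} = g ` {i\<in>A'. mfps_nth (G i) m \<noteq> 0}" for m
    using bij FG by (force simp: bij_betw_def)
  have inj: "inj_on g {i\<in>A'. mfps_nth (G i) m \<noteq> 0}" for m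
    using bij by (auto simp: bij_betw_def intro: inj_on_subset)
  show "mfps_summable A' G = mfps_summable A F"
    unfolding mfps_summable_def supp using inj finite_image_iff by blast
  show "mfps_sum A' G = mfps_sum A F"
    unfolding mfps_sum_def supp using FG by (simp add: sum.reindex[OF inj])
qed

lemma
  fixes F :: "'i \<Rightarrow> ('n::finite, 'a::comm_ring_1) mfps"
  assumes "A \<subseteq> A'" "\<And>i. i \<in> A' - A \<Longrightarrow> F i = 0"
  shows mfps_sum_mono_neutral: "mfps_sum A' F = mfps_sum A F"
    and mfps_summable_mono_neutral: "mfps_summable A' F = mfps_summable A F"
proof -
  have "{i\<in>A'. mfps_nth (F i) m \<noteq> 0} = {i\<in>A. mfps_nth (F i) m \<noteq> 0}" for m
    using assms by fastforce
  then show "mfps_sum A' F = mfps_sum A F" "mfps_summable A' F = mfps_summable A F"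
    unfolding mfps_sum_def mfps_summable_def by simp_all
qed

lemma mfps_summable_powers:
  fixes X :: "('n::finite, 'a::comm_ring_1) mfps" and e :: "'i \<Rightarrow> nat"
  assumes X0: "mfps_nth X 0 = 0" and fin: "\<And>d. finite {i\<in>A. e i \<le> d}"
  shows "mfps_summable A (\<lambda>i. mfps_const (c i) * X ^ e i)"
  unfolding mfps_summable_def
proof
  fix m
  have "{i\<in>A. mfps_nth (mfps_const (c i) * X ^ e i) m \<noteq> 0} \<subseteq> {i\<in>A. e i \<le> total_deg m}"
    using le_total_deg_if_mfps_nth_power_nonzero[OF X0] by (auto dest: mult_not_zero)
  then show "finite {i\<in>A. mfps_nth (mfps_const (c i) * X ^ e i) m \<noteq> 0}"
    using fin by (rule finite_subset)
qed

section \<open>Binomial series and integer powers\<close>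

text \<open>\<open>gchoose\<close> at type \<open>int\<close> cannot be written here: its syntax is constrained to fields, so an
  integer argument would be coerced to \<open>real\<close>.\<close>

definition int_gchoose :: "int \<Rightarrow> nat \<Rightarrow> int" where
  "int_gchoose h n = (\<Prod>i<n. h - int i) div fact n"

lemma of_int_int_gchoose: "of_int (int_gchoose h n) = (of_int h gchoose n :: 'a::field_char_0)"
  unfolding int_gchoose_def lessThan_atLeast0 gbinomial_int_mult_fact'[symmetric]
  by (simp add: of_int_gbinomial)

lemma int_gchoose_0 [simp]: "int_gchoose h 0 = 1"
  by (simp add: int_gchoose_def)

lemma int_gchoose_Suc0 [simp]: "int_gchoose h (Suc 0) = h"
  by (simp add: int_gchoose_def)

lemma int_gchoose_eq_0: "0 \<le> h \<Longrightarrow> h < int n \<Longrightarrow> int_gchoose h n = 0"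
  unfolding int_gchoose_def
  by (subst prod_zero) (auto intro!: bexI[of _ "nat h"])

lemma int_gchoose_Vandermonde:
  "(\<Sum>k=0..n. int_gchoose a k * int_gchoose b (n - k)) = int_gchoose (a + b) n"
proof -
  have "(of_int (\<Sum>k=0..n. int_gchoose a k * int_gchoose b (n - k)) :: rat)
      = (\<Sum>k=0..n. (of_int a gchoose k) * (of_int b gchoose (n - k)))"
    by (simp add: of_int_int_gchoose)
  also have "\<dots> = (of_int a + of_int b) gchoose n" by (rule gbinomial_Vandermonde)
  also have "\<dots> = of_int (int_gchoose (a + b) n)" by (simp add: of_int_int_gchoose)
  finally show ?thesis by (simp only: of_int_eq_iff)
qed

lemma mfps_summable_powers_nat:
  fixes X :: "('n::finite, 'a::comm_ring_1) mfps"
  shows "mfps_nth X 0 = 0 \<Longrightarrow> mfps_summable UNIV (\<lambda>n. mfps_const (c n) * X ^ n)"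
  by (rule mfps_summable_powers[where e = "\<lambda>n. n"]) simp_all

lemma mfps_summable_powers_pairs:
  fixes X :: "('n::finite, 'a::comm_ring_1) mfps"
  assumes "mfps_nth X 0 = 0"
  shows "mfps_summable (UNIV \<times> UNIV) (\<lambda>(i, j). mfps_const (c i j) * X ^ (i + j))"
proof -
  have "finite {x \<in> UNIV \<times> UNIV. fst x + snd x \<le> d}" for d :: nat
    by (rule finite_subset[of _ "{..d} \<times> {..d}"]) auto
  then have "mfps_summable (UNIV \<times> UNIV) (\<lambda>x. mfps_const (c (fst x) (snd x)) * X ^ (fst x + snd x))"
    by (intro mfps_summable_powers[OF assms])
  then show ?thesis by (simp add: case_prod_beta')
qed

lemma mfps_sum_powers_pairs:
  fixes X :: "('n::finite, 'a::comm_ring_1) mfps"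
  assumes X0: "mfps_nth X 0 = 0"
  shows "mfps_sum (UNIV \<times> UNIV) (\<lambda>(i, j). mfps_const (a i * b j) * X ^ (i + j))
       = mfps_sum UNIV (\<lambda>n. mfps_const (\<Sum>i=0..n. a i * b (n - i)) * X ^ n)"
proof -
  define F where "F = (\<lambda>(i, j). mfps_const (a i * b j) * X ^ (i + j))"
  define g :: "nat \<times> nat \<Rightarrow> nat \<times> nat" where "g = (\<lambda>(n, i). (i, n - i))"
  have bij: "bij_betw g (Sigma UNIV (\<lambda>n. {0..n})) (UNIV \<times> UNIV)"
    by (rule bij_betw_byWitness[where f' = "\<lambda>(i, j). (i + j, i)"]) (auto simp: g_def image_def)
  have F_g: "F (g x) = (case x of (n, i) \<Rightarrow> mfps_const (a i * b (n - i)) * X ^ n)"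
    if "x \<in> Sigma UNIV (\<lambda>n. {0..n})" for x
    using that by (auto simp: F_def g_def)
  have summable: "mfps_summable (Sigma UNIV (\<lambda>n. {0..n})) (\<lambda>(n, i). mfps_const (a i * b (n - i)) * X ^ n)"
    using mfps_summable_reindex_bij_betw[where F = F, OF bij F_g] mfps_summable_powers_pairs[OF X0]
    by (simp add: F_def)
  have "mfps_sum (UNIV \<times> UNIV) F = mfps_sum (Sigma UNIV (\<lambda>n. {0..n})) (\<lambda>(n, i). mfps_const (a i * b (n - i)) * X ^ n)"
    by (rule mfps_sum_reindex_bij_betw[where F = F, OF bij F_g, symmetric])
  also have "\<dots> = mfps_sum UNIV (\<lambda>n. mfps_sum {0..n} (\<lambda>i. mfps_const (a i * b (n - i)) * X ^ n))"
    by (rule mfps_sum_Sigma[OF summable])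
  also have "\<dots> = mfps_sum UNIV (\<lambda>n. mfps_const (\<Sum>i=0..n. a i * b (n - i)) * X ^ n)"
    by (simp add: mfps_sum_finite mfps_const_sum sum_distrib_right)
  finally show ?thesis by (simp add: F_def)
qed

lemma mfps_sum_powers_mult:
  fixes X :: "('n::finite, 'a::comm_ring_1) mfps"
  assumes X0: "mfps_nth X 0 = 0"
  shows "mfps_sum UNIV (\<lambda>n. mfps_const (a n) * X ^ n) * mfps_sum UNIV (\<lambda>n. mfps_const (b n) * X ^ n)
       = mfps_sum UNIV (\<lambda>n. mfps_const (\<Sum>i=0..n. a i * b (n - i)) * X ^ n)"
proof -
  have "mfps_sum UNIV (\<lambda>n. mfps_const (a n) * X ^ n) * mfps_sum UNIV (\<lambda>n. mfps_const (b n) * X ^ n)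
      = mfps_sum UNIV (\<lambda>i. mfps_const (a i) * X ^ i * mfps_sum UNIV (\<lambda>j. mfps_const (b j) * X ^ j))"
    by (rule mfps_sum_mult_right[OF mfps_summable_powers_nat[OF X0]])
  also have "\<dots> = mfps_sum UNIV (\<lambda>i. mfps_sum UNIV (\<lambda>j. mfps_const (a i * b j) * X ^ (i + j)))"
  proof (rule mfps_sum_cong)
    fix i
    show "mfps_const (a i) * X ^ i * mfps_sum UNIV (\<lambda>j. mfps_const (b j) * X ^ j)
        = mfps_sum UNIV (\<lambda>j. mfps_const (a i * b j) * X ^ (i + j))"
      unfolding mfps_sum_mult_left[OF mfps_summable_powers_nat[OF X0]]
      by (simp add: mfps_const_mult power_add ac_simps)
  qed
  also have "\<dots> = mfps_sum (UNIV \<times> UNIV) (\<lambda>(i, j). mfps_const (a i * b j) * X ^ (i + j))"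
    by (rule mfps_sum_Sigma[symmetric, OF mfps_summable_powers_pairs[OF X0]])
  also have "\<dots> = mfps_sum UNIV (\<lambda>n. mfps_const (\<Sum>i=0..n. a i * b (n - i)) * X ^ n)"
    by (rule mfps_sum_powers_pairs[OF X0])
  finally show ?thesis .
qed

text \<open>The series (1 + X)^h; if \<open>X\<close> has a constant term the family is not summable and the
  value is junk.\<close>

definition binomial_series :: "('n::finite, 'a::comm_ring_1) mfps \<Rightarrow> int \<Rightarrow> ('n, 'a) mfps" where
  "binomial_series X h = mfps_sum UNIV (\<lambda>n. mfps_const (of_int (int_gchoose h n)) * X ^ n)"

lemma binomial_series_add:
  fixes X :: "('n::finite, 'a::comm_ring_1) mfps"
  assumes "mfps_nth X 0 = 0"
  shows "binomial_series X a * binomial_series X b = binomial_series X (a + b)"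
  unfolding binomial_series_def mfps_sum_powers_mult[OF assms]
  by (simp flip: int_gchoose_Vandermonde)

lemma binomial_series_small:
  fixes X :: "('n::finite, 'a::comm_ring_1) mfps"
  assumes "0 \<le> h"
  shows "binomial_series X h = (\<Sum>n\<le>nat h. mfps_const (of_int (int_gchoose h n)) * X ^ n)"
proof -
  have "binomial_series X h = mfps_sum {..nat h} (\<lambda>n. mfps_const (of_int (int_gchoose h n)) * X ^ n)"
    unfolding binomial_series_def using assms
    by (intro mfps_sum_mono_neutral) (auto simp: int_gchoose_eq_0)
  then show ?thesis by (simp add: mfps_sum_finite)
qed

lemma binomial_series_0: "binomial_series X 0 = 1"
  by (simp add: binomial_series_small)

lemma binomial_series_1: "binomial_series X 1 = 1 + X"
  by (simp add: binomial_series_small)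

definition mfps_powi :: "('n::finite, 'a::comm_ring_1) mfps \<Rightarrow> int \<Rightarrow> ('n, 'a) mfps" where
  "mfps_powi L h = binomial_series (L - 1) h"

lemma mfps_powi_0 [simp]: "mfps_powi L 0 = 1"
  by (simp add: mfps_powi_def binomial_series_0)

lemma mfps_powi_1 [simp]: "mfps_powi L 1 = L"
  by (simp add: mfps_powi_def binomial_series_1)

lemma mfps_powi_add:
  fixes L :: "('n::finite, 'a::comm_ring_1) mfps"
  assumes "mfps_nth L 0 = 1"
  shows "mfps_powi L a * mfps_powi L b = mfps_powi L (a + b)"
  unfolding mfps_powi_def using assms
  by (intro binomial_series_add) (simp add: mfps_nth_one_apply)

lemma mfps_powi_power:
  fixes L :: "('n::finite, 'a::comm_ring_1) mfps"
  assumes "mfps_nth L 0 = 1"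
  shows "mfps_powi L a ^ m = mfps_powi L (int m * a)"
  by (induction m) (simp_all add: mfps_powi_add[OF assms] algebra_simps)

lemma ps_inv_eq:
  fixes L :: "('n::finite, 'a::comm_ring_1) mfps"
  assumes L0: "mfps_nth L 0 = 1"
  shows "ps_inv (mfps_nth L) = mfps_nth (mfps_powi L (-1))"
proof -
  have inverse: "L * mfps_powi L (-1) = 1"
    using mfps_powi_add[OF L0, of 1 "-1"] by simp
  show ?thesis
    unfolding ps_inv_def
  proof (rule the_equality)
    show "ps_mult (mfps_nth L) (mfps_nth (mfps_powi L (-1))) = ps_one"
      using arg_cong[OF inverse, of mfps_nth] by (simp add: mfps_nth_mult mfps_nth_one)
  next
    fix g assume "ps_mult (mfps_nth L) g = ps_one"
    then have "L * Abs_mfps g = 1" by (simp add: times_mfps_def one_mfps_def)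
    have "Abs_mfps g = Abs_mfps g * (L * mfps_powi L (-1))"
      using inverse by simp
    also have "\<dots> = (L * Abs_mfps g) * mfps_powi L (-1)"
      by (simp only: ac_simps)
    finally have "Abs_mfps g = mfps_powi L (-1)"
      using \<open>L * Abs_mfps g = 1\<close> by simp
    then show "g = mfps_nth (mfps_powi L (-1))" by (metis mfps_nth_Abs_mfps)
  qed
qed

lemma ps_powi_eq:
  fixes L :: "('n::finite, 'a::comm_ring_1) mfps"
  assumes L0: "mfps_nth L 0 = 1"
  shows "ps_powi (mfps_nth L) h = mfps_nth (mfps_powi L h)"
proof (cases "0 \<le> h")
  case True
  then have "mfps_powi L h = L ^ nat h"
    using mfps_powi_power[OF L0, of 1 "nat h"] by simp
  then show ?thesis using True by (simp add: ps_powi_def ps_pow_eq mfps_nth_inverse)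
next
  case False
  then have "mfps_powi L h = mfps_powi L (-1) ^ nat (- h)"
    using mfps_powi_power[OF L0, of "-1" "nat (- h)"] by simp
  then show ?thesis using False ps_inv_eq[OF L0]
    by (simp add: ps_powi_def ps_pow_eq mfps_nth_inverse)
qed

section \<open>The multinomial theorem\<close>

definition weak_compositions :: "nat \<Rightarrow> nat \<Rightarrow> (nat \<Rightarrow> nat) set" where
  "weak_compositions r n = {u. (\<forall>s. s \<notin> {1..r} \<longrightarrow> u s = 0) \<and> (\<Sum>s=1..r. u s) = n}"

definition multinomial :: "(nat \<Rightarrow> nat) \<Rightarrow> nat \<Rightarrow> nat" where
  "multinomial u r = (\<Prod>s=1..r. (\<Sum>t=1..s. u t) choose u s)"

lemma multinomial_cong: "(\<And>s. s \<in> {1..r} \<Longrightarrow> u s = u' s) \<Longrightarrow> multinomial u r = multinomial u' r"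
  unfolding multinomial_def by (intro prod.cong refl arg_cong2[where f = "(choose)"] sum.cong) auto

lemma fact_multinomial: "(\<Prod>s=1..r. fact (u s)) * multinomial u r = (fact (\<Sum>s=1..r. u s) :: nat)"
proof (induction r)
  case 0
  then show ?case by (simp add: multinomial_def)
next
  case (Suc r)
  let ?S = "\<Sum>s=1..r. u s"
  have "fact (u (Suc r)) * fact ?S * ((?S + u (Suc r)) choose u (Suc r)) = (fact (?S + u (Suc r)) :: nat)"
    using binomial_fact_lemma[of "u (Suc r)" "?S + u (Suc r)"] by simp
  then show ?case using Suc.IH by (simp add: multinomial_def ac_simps)
qed

lemma multinom_eq_multinomial:
  "multinom n0 u r = (if n0 = (\<Sum>s=1..r. u s) then int (multinomial u r) else 0)"
proof -
  have "(\<Prod>s=1..r. fact (u s) :: nat) \<noteq> 0" by (simp add: prod_zero_iff)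
  then have "fact (\<Sum>s=1..r. u s) div (\<Prod>s=1..r. fact (u s)) = multinomial u r"
    by (metis fact_multinomial nonzero_mult_div_cancel_left)
  then show ?thesis by (simp add: multinom_def)
qed

lemma finite_weak_compositions: "finite (weak_compositions r n)"
proof (rule finite_subset)
  show "weak_compositions r n \<subseteq> {u. \<forall>s. (s \<in> {1..r} \<longrightarrow> u s \<in> {0..n}) \<and> (s \<notin> {1..r} \<longrightarrow> u s = 0)}"
    by (auto simp: weak_compositions_def intro: member_le_sum[of _ "{1..r}", simplified])
  show "finite {u. \<forall>s. (s \<in> {1..r} \<longrightarrow> u s \<in> {0..n}) \<and> (s \<notin> {1..r} \<longrightarrow> u s = (0::nat))}"
    by (rule finite_set_of_finite_funs) auto
qed

lemma bij_betw_weak_compositions_Suc: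
  "bij_betw (\<lambda>(k, u). u(Suc r := k)) (Sigma {..n} (\<lambda>k. weak_compositions r (n - k)))
     (weak_compositions (Suc r) n)"
proof (rule bij_betw_byWitness[where f' = "\<lambda>w. (w (Suc r), w(Suc r := 0))"])
  have sum_upd: "(\<Sum>s=1..r. (u(Suc r := k)) s) = (\<Sum>s=1..r. u s)" for u :: "nat \<Rightarrow> nat" and k
    by (rule sum.cong) auto
  show "\<forall>x\<in>Sigma {..n} (\<lambda>k. weak_compositions r (n - k)).
      (\<lambda>w. (w (Suc r), w(Suc r := 0))) ((\<lambda>(k, u). u(Suc r := k)) x) = x"
    by (auto simp: weak_compositions_def fun_eq_iff)
  show "\<forall>w\<in>weak_compositions (Suc r) n. (\<lambda>(k, u). u(Suc r := k)) (w (Suc r), w(Suc r := 0)) = w"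
    by auto
  show "(\<lambda>(k, u). u(Suc r := k)) ` Sigma {..n} (\<lambda>k. weak_compositions r (n - k))
      \<subseteq> weak_compositions (Suc r) n"
    by (auto simp: weak_compositions_def sum_upd)
  show "(\<lambda>w. (w (Suc r), w(Suc r := 0))) ` weak_compositions (Suc r) n
      \<subseteq> Sigma {..n} (\<lambda>k. weak_compositions r (n - k))"
    by (auto simp: weak_compositions_def sum_upd)
qed

theorem multinomial_theorem:
  fixes a :: "nat \<Rightarrow> 'b::comm_semiring_1"
  shows "(\<Sum>s=1..r. a s) ^ n = (\<Sum>u\<in>weak_compositions r n. of_nat (multinomial u r) * (\<Prod>s=1..r. a s ^ u s))"
proof (induction r arbitrary: n)
  case 0
  have "weak_compositions 0 n = (if n = 0 then {\<lambda>_. 0} else {})"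
    by (auto simp: weak_compositions_def)
  then show ?case by (simp add: multinomial_def zero_power)
next
  case (Suc r)
  define T where "T u = of_nat (multinomial u (Suc r)) * (\<Prod>s=1..Suc r. a s ^ u s)" for u
  have T_upd: "T (u(Suc r := k)) = of_nat (n choose k) * a (Suc r) ^ k
      * (of_nat (multinomial u r) * (\<Prod>s=1..r. a s ^ u s))"
    if "k \<le> n" "u \<in> weak_compositions r (n - k)" for k u
  proof -
    have "multinomial (u(Suc r := k)) r = multinomial u r" "(\<Sum>s=1..r. u s) + k = n"
      "(\<Prod>s=1..r. a s ^ (u(Suc r := k)) s) = (\<Prod>s=1..r. a s ^ u s)"
      using that by (auto intro!: multinomial_cong prod.cong simp: weak_compositions_def)
    then show ?thesis by (simp add: T_def multinomial_def ac_simps)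
  qed
  have "(\<Sum>s=1..Suc r. a s) ^ n = (a (Suc r) + (\<Sum>s=1..r. a s)) ^ n" by (simp add: add.commute)
  also have "\<dots> = (\<Sum>k\<le>n. of_nat (n choose k) * a (Suc r) ^ k * (\<Sum>s=1..r. a s) ^ (n - k))"
    by (rule binomial_ring)
  also have "\<dots> = (\<Sum>k\<le>n. \<Sum>u\<in>weak_compositions r (n - k). T (u(Suc r := k)))"
    unfolding Suc.IH sum_distrib_left by (intro sum.cong refl) (simp add: T_upd)
  also have "\<dots> = (\<Sum>(k, u)\<in>Sigma {..n} (\<lambda>k. weak_compositions r (n - k)). T (u(Suc r := k)))"
    by (rule sum.Sigma) (simp_all add: finite_weak_compositions)
  also have "\<dots> = (\<Sum>w\<in>weak_compositions (Suc r) n. T w)"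
    using sum.reindex_bij_betw[OF bij_betw_weak_compositions_Suc, of T] by (simp add: case_prod_beta')
  finally show ?case by (simp add: T_def)
qed

section \<open>Integer powers of a polynomial in a series without constant term\<close>

definition exponent_tuples :: "nat \<Rightarrow> (nat \<Rightarrow> nat) set" where
  "exponent_tuples r = {v. \<forall>s. r < s \<longrightarrow> v s = 0}"

definition weight :: "(nat \<Rightarrow> nat) \<Rightarrow> nat \<Rightarrow> nat" where
  "weight v r = (\<Sum>s=1..r. s * v s)"

text \<open>\<open>power_coeff h zz r v\<close> is the factor {h; v 0, v 1, ..., v r} prod_s zz_s^(v s) of the
  formula. In the expansion of (sum_s zz_s W^s)^h, \<open>v 0\<close> is the power of the non-constant part
  taken from the binomial series and \<open>v 1, ..., v r\<close> distribute it among its monomials; \<open>gbin\<close>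
  vanishes unless \<open>v 0 = v 1 + ... + v r\<close>.\<close>

definition power_coeff :: "int \<Rightarrow> (nat \<Rightarrow> 'a::comm_ring_1) \<Rightarrow> nat \<Rightarrow> (nat \<Rightarrow> nat) \<Rightarrow> 'a" where
  "power_coeff h zz r v = of_int (gbin h (v 0) v r) * (\<Prod>s=1..r. zz s ^ v s)"

lemma gbin_eq: "gbin h n0 ns rr = int_gchoose h n0 * multinom n0 ns rr"
  by (simp add: gbin_def int_gchoose_def)

lemma sum_le_weight: "(\<Sum>s=1..r. v s) \<le> weight v r"
  unfolding weight_def by (rule sum_mono) simp

lemma entry_le_weight:
  assumes "v 0 = (\<Sum>s=1..r. v s)" "s \<le> r"
  shows "v s \<le> weight v r"
proof (cases "s = 0")
  case True
  then show ?thesis using assms(1) sum_le_weight[of v r] by simp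
next
  case False
  then have "v s \<le> s * v s" by simp
  also have "\<dots> \<le> weight v r"
    unfolding weight_def using False assms(2) by (intro member_le_sum) auto
  finally show ?thesis .
qed

lemma power_coeff_eq_0: "v 0 \<noteq> (\<Sum>s=1..r. v s) \<Longrightarrow> power_coeff h zz r v = 0"
  by (simp add: power_coeff_def gbin_eq multinom_eq_multinomial)

lemma power_coeff_fun_upd_0:
  "u \<in> weak_compositions r n \<Longrightarrow>
   power_coeff h zz r (u(0 := n)) = of_int (int_gchoose h n) * of_nat (multinomial u r) * (\<Prod>s=1..r. zz s ^ u s)"
  using multinomial_cong[of r "u(0 := n)" u]
  by (auto simp: power_coeff_def gbin_eq multinom_eq_multinomial weak_compositions_def
           intro!: prod.cong sum.cong)

lemma weight_fun_upd_0: "weight (u(0 := n)) r = weight u r"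
  unfolding weight_def by (rule sum.cong) auto

lemma bij_betw_weak_compositions_tuples:
  "bij_betw (\<lambda>(n, u). u(0 := n)) (Sigma UNIV (weak_compositions r))
     {v \<in> exponent_tuples r. v 0 = (\<Sum>s=1..r. v s)}"
proof (rule bij_betw_byWitness[where f' = "\<lambda>v. (v 0, v(0 := 0))"])
  have sum_upd: "(\<Sum>s=1..r. (u(0 := k)) s) = (\<Sum>s=1..r. u s)" for u :: "nat \<Rightarrow> nat" and k
    by (rule sum.cong) auto
  show "\<forall>x\<in>Sigma UNIV (weak_compositions r). (\<lambda>v. (v 0, v(0 := 0))) ((\<lambda>(n, u). u(0 := n)) x) = x"
    by (auto simp: weak_compositions_def fun_eq_iff)
  show "\<forall>v\<in>{v \<in> exponent_tuples r. v 0 = (\<Sum>s=1..r. v s)}. (\<lambda>(n, u). u(0 := n)) (v 0, v(0 := 0)) = v"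
    by auto
  show "(\<lambda>(n, u). u(0 := n)) ` Sigma UNIV (weak_compositions r)
      \<subseteq> {v \<in> exponent_tuples r. v 0 = (\<Sum>s=1..r. v s)}"
    by (auto simp: weak_compositions_def exponent_tuples_def sum_upd)
  show "(\<lambda>v. (v 0, v(0 := 0))) ` {v \<in> exponent_tuples r. v 0 = (\<Sum>s=1..r. v s)}
      \<subseteq> Sigma UNIV (weak_compositions r)"
    by (auto simp: weak_compositions_def exponent_tuples_def sum_upd)
qed

lemma power_poly_expansion:
  fixes W :: "('n::finite, 'a::comm_ring_1) mfps"
  shows "(\<Sum>s=1..r. mfps_const (zz s) * W ^ s) ^ n
       = (\<Sum>u\<in>weak_compositions r n.
            mfps_const (of_nat (multinomial u r) * (\<Prod>s=1..r. zz s ^ u s)) * W ^ weight u r)"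
proof -
  have "(\<Prod>s=1..r. (mfps_const (zz s) * W ^ s) ^ u s) = mfps_const (\<Prod>s=1..r. zz s ^ u s) * W ^ weight u r"
    for u
    by (simp add: power_mult_distrib prod.distrib mfps_const_prod mfps_const_power weight_def
        power_sum power_mult[symmetric] mult.commute)
  then show ?thesis
    unfolding multinomial_theorem by (simp add: mfps_const_mult mfps_const_of_nat mult.assoc)
qed

lemma
  fixes F :: "(nat \<Rightarrow> nat) \<Rightarrow> ('n::finite, 'a::comm_ring_1) mfps"
  assumes "\<And>v. v \<in> exponent_tuples r \<Longrightarrow> v 0 \<noteq> (\<Sum>s=1..r. v s) \<Longrightarrow> F v = 0"
  shows mfps_sum_exponent_tuples:
      "mfps_sum (exponent_tuples r) F = mfps_sum (Sigma UNIV (weak_compositions r)) (\<lambda>(n, u). F (u(0 := n)))"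
    and mfps_summable_exponent_tuples:
      "mfps_summable (exponent_tuples r) F
     = mfps_summable (Sigma UNIV (weak_compositions r)) (\<lambda>(n, u). F (u(0 := n)))"
proof -
  let ?I = "{v \<in> exponent_tuples r. v 0 = (\<Sum>s=1..r. v s)}"
  have sub: "?I \<subseteq> exponent_tuples r" and vanish: "\<And>v. v \<in> exponent_tuples r - ?I \<Longrightarrow> F v = 0"
    using assms by auto
  show "mfps_sum (exponent_tuples r) F = mfps_sum (Sigma UNIV (weak_compositions r)) (\<lambda>(n, u). F (u(0 := n)))"
  proof -
    have "mfps_sum (exponent_tuples r) F = mfps_sum ?I F"
      by (rule mfps_sum_mono_neutral[OF sub vanish])
    also have "\<dots> = mfps_sum (Sigma UNIV (weak_compositions r)) (\<lambda>(n, u). F (u(0 := n)))"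
      by (rule mfps_sum_reindex_bij_betw[OF bij_betw_weak_compositions_tuples, symmetric]) auto
    finally show ?thesis .
  qed
  show "mfps_summable (exponent_tuples r) F
      = mfps_summable (Sigma UNIV (weak_compositions r)) (\<lambda>(n, u). F (u(0 := n)))"
  proof -
    have "mfps_summable (exponent_tuples r) F = mfps_summable ?I F"
      by (rule mfps_summable_mono_neutral[OF sub vanish])
    also have "\<dots> = mfps_summable (Sigma UNIV (weak_compositions r)) (\<lambda>(n, u). F (u(0 := n)))"
      by (rule mfps_summable_reindex_bij_betw[OF bij_betw_weak_compositions_tuples, symmetric]) auto
    finally show ?thesis .
  qed
qed

lemma mfps_summable_binomial_multinomial:
  fixes W :: "('n::finite, 'a::comm_ring_1) mfps"
  assumes W0: "mfps_nth W 0 = 0"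
  shows "mfps_summable (Sigma UNIV (weak_compositions r))
    (\<lambda>(n, u). mfps_const (power_coeff h zz r (u(0 := n))) * W ^ weight (u(0 := n)) r)"
proof -
  have bounded: "{x \<in> Sigma UNIV (weak_compositions r). weight (snd x) r \<le> d}
      \<subseteq> Sigma {..d} (weak_compositions r)" for d
  proof
    fix x assume x: "x \<in> {x \<in> Sigma UNIV (weak_compositions r). weight (snd x) r \<le> d}"
    then have "fst x = (\<Sum>s=1..r. snd x s)" "snd x \<in> weak_compositions r (fst x)"
      by (auto simp: weak_compositions_def)
    with x sum_le_weight[of "snd x" r] show "x \<in> Sigma {..d} (weak_compositions r)"
      by (cases x) auto
  qed
  have "mfps_summable (Sigma UNIV (weak_compositions r))
      (\<lambda>x. mfps_const (power_coeff h zz r ((snd x)(0 := fst x))) * W ^ weight (snd x) r)"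
    by (intro mfps_summable_powers[OF W0] finite_subset[OF bounded] finite_SigmaI)
       (simp_all add: finite_weak_compositions)
  then show ?thesis by (simp add: case_prod_beta' weight_fun_upd_0)
qed

lemma mfps_powi_poly_binomial_multinomial:
  fixes W :: "('n::finite, 'a::comm_ring_1) mfps"
  assumes W0: "mfps_nth W 0 = 0" and zz0: "zz 0 = 1"
  shows "mfps_powi (\<Sum>s=0..r. mfps_const (zz s) * W ^ s) h
       = mfps_sum (Sigma UNIV (weak_compositions r))
           (\<lambda>(n, u). mfps_const (power_coeff h zz r (u(0 := n))) * W ^ weight (u(0 := n)) r)"
proof -
  define X where "X = (\<Sum>s=1..r. mfps_const (zz s) * W ^ s)"
  have "{0..r} = insert 0 {1..r}" by auto
  then have "(\<Sum>s=0..r. mfps_const (zz s) * W ^ s) - 1 = X" by (simp add: X_def zz0)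
  then have "mfps_powi (\<Sum>s=0..r. mfps_const (zz s) * W ^ s) h
      = mfps_sum UNIV (\<lambda>n. mfps_const (of_int (int_gchoose h n)) * X ^ n)"
    by (simp add: mfps_powi_def binomial_series_def)
  also have "\<dots> = mfps_sum UNIV (\<lambda>n. mfps_sum (weak_compositions r n)
      (\<lambda>u. mfps_const (power_coeff h zz r (u(0 := n))) * W ^ weight (u(0 := n)) r))"
    unfolding X_def power_poly_expansion
    by (intro mfps_sum_cong) (simp add: mfps_sum_finite finite_weak_compositions sum_distrib_left
        power_coeff_fun_upd_0 weight_fun_upd_0 mfps_const_mult mult.assoc cong: sum.cong)
  also have "\<dots> = mfps_sum (Sigma UNIV (weak_compositions r))
      (\<lambda>(n, u). mfps_const (power_coeff h zz r (u(0 := n))) * W ^ weight (u(0 := n)) r)"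
    by (rule mfps_sum_Sigma[symmetric, OF mfps_summable_binomial_multinomial[OF W0]])
  finally show ?thesis .
qed

lemma mfps_summable_poly_power:
  fixes W :: "('n::finite, 'a::comm_ring_1) mfps"
  assumes "mfps_nth W 0 = 0"
  shows "mfps_summable (exponent_tuples r) (\<lambda>v. mfps_const (power_coeff h zz r v) * W ^ weight v r)"
proof (subst mfps_summable_exponent_tuples)
  show "mfps_summable (Sigma UNIV (weak_compositions r))
      (\<lambda>(n, u). mfps_const (power_coeff h zz r (u(0 := n))) * W ^ weight (u(0 := n)) r)"
    by (rule mfps_summable_binomial_multinomial[OF assms])
qed (simp add: power_coeff_eq_0)

lemma mfps_powi_poly:
  fixes W :: "('n::finite, 'a::comm_ring_1) mfps"
  assumes "mfps_nth W 0 = 0" and "zz 0 = 1"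
  shows "mfps_powi (\<Sum>s=0..r. mfps_const (zz s) * W ^ s) h
       = mfps_sum (exponent_tuples r) (\<lambda>v. mfps_const (power_coeff h zz r v) * W ^ weight v r)"
proof (subst mfps_sum_exponent_tuples)
  show "mfps_powi (\<Sum>s=0..r. mfps_const (zz s) * W ^ s) h
      = mfps_sum (Sigma UNIV (weak_compositions r))
          (\<lambda>(n, u). mfps_const (power_coeff h zz r (u(0 := n))) * W ^ weight (u(0 := n)) r)"
    by (rule mfps_powi_poly_binomial_multinomial[where zz = zz, OF assms])
qed (simp add: power_coeff_eq_0)

section \<open>The monomials yhat^a\<close>

lemma power_mult_power_of_inverse:
  fixes x xi :: "'a::comm_ring_1"
  assumes "x * xi = 1"
  shows "x ^ a * xi ^ b = (if b \<le> a then x ^ (a - b) else xi ^ (b - a))"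
proof (cases "b \<le> a")
  case True
  then have "x ^ a = x ^ (a - b) * x ^ b" by (simp flip: power_add)
  then have "x ^ a * xi ^ b = x ^ (a - b) * (x * xi) ^ b"
    by (simp add: power_mult_distrib mult.assoc)
  then show ?thesis using True assms by simp
next
  case False
  then have "xi ^ b = xi ^ (b - a) * xi ^ a" by (simp flip: power_add)
  then have "x ^ a * xi ^ b = xi ^ (b - a) * (x * xi) ^ a"
    by (simp add: power_mult_distrib mult_ac)
  then show ?thesis using False assms by simp
qed

lemma xpow_add:
  assumes "x j * xi j = 1"
  shows "xpow x xi j e * xpow x xi j f = xpow x xi j (e + f)"
proof -
  have "x j ^ nat e * xi j ^ nat (- f) = xpow x xi j (e + f)" if "0 \<le> e" "f < 0"
    using that power_mult_power_of_inverse[OF assms, of "nat e" "nat (- f)"]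
    by (auto simp: xpow_def nat_diff_distrib' intro!: arg_cong2[where f = "(^)"])
  moreover have "x j ^ nat f * xi j ^ nat (- e) = xpow x xi j (e + f)" if "e < 0" "0 \<le> f"
    using that power_mult_power_of_inverse[OF assms, of "nat f" "nat (- e)"]
    by (auto simp: xpow_def nat_diff_distrib' intro!: arg_cong2[where f = "(^)"])
  moreover have "nat (- e) + nat (- f) = nat (- (e + f))" if "e < 0" "f < 0"
    using that by simp
  ultimately show ?thesis
    by (auto simp: xpow_def mult.commute nat_add_distrib simp flip: power_add)
qed

lemma xmon_add:
  "\<forall>j. x j * xi j = 1 \<Longrightarrow> xmon x xi e * xmon x xi f = xmon x xi (e + f)"
  unfolding xmon_def prod.distrib[symmetric] by (simp add: xpow_add)

definition mfps_yhat :: "('n::finite \<Rightarrow> 'n \<Rightarrow> int) \<Rightarrow> ('n \<Rightarrow> 'a::comm_ring_1) \<Rightarrow> ('n \<Rightarrow> 'a)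
    \<Rightarrow> ('n \<Rightarrow> nat) \<Rightarrow> ('n, 'a) mfps" where
  "mfps_yhat B x xi a = Abs_mfps (yhat B x xi a)"

lemma mfps_nth_yhat_0: "a \<noteq> 0 \<Longrightarrow> mfps_nth (mfps_yhat B x xi a) 0 = 0"
  by (auto simp: mfps_yhat_def yhat_def)

lemma mfps_yhat_0: "mfps_yhat B x xi (\<lambda>_. 0) = 1"
  by (rule mfps_eqI) (simp add: mfps_yhat_def yhat_def mfps_nth_one_apply xmon_def xpow_def zero_fun_def)

lemma mfps_yhat_add:
  assumes "\<forall>j. x j * xi j = 1"
  shows "mfps_yhat B x xi a * mfps_yhat B x xi b = mfps_yhat B x xi (a + b)"
proof (rule mfps_eqI)
  fix m
  define xm where "xm c = xmon x xi (\<lambda>j. \<Sum>i\<in>UNIV. B j i * int (c i))" for c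
  have xm_add: "xm a * xm b = xm (a + b)"
    by (simp add: xm_def xmon_add[OF assms] plus_fun_def sum.distrib distrib_left)
  have "mfps_nth (mfps_yhat B x xi a * mfps_yhat B x xi b) m
      = (\<Sum>p\<in>{..m}. if p = a then (if m - p = b then xm a * xm b else 0) else 0)"
    unfolding mfps_nth_mult ps_mult_atMost mfps_yhat_def by (rule sum.cong) (auto simp: yhat_def xm_def)
  also have "\<dots> = (if a \<le> m \<and> m - a = b then xm a * xm b else 0)"
    by (simp add: finite_atMost_fun)
  also have "a \<le> m \<and> m - a = b \<longleftrightarrow> m = a + b"
    by (auto simp: le_fun_def fun_diff_def fun_eq_iff) (metis le_add_diff_inverse)
  finally show "mfps_nth (mfps_yhat B x xi a * mfps_yhat B x xi b) m = mfps_nth (mfps_yhat B x xi (a + b)) m"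
    using xm_add by (simp add: mfps_yhat_def yhat_def xm_def)
qed

lemma mfps_yhat_power:
  assumes "\<forall>j. x j * xi j = 1"
  shows "mfps_yhat B x xi a ^ N = mfps_yhat B x xi (\<lambda>m. N * a m)"
proof (induction N)
  case 0
  then show ?case by (simp add: mfps_yhat_0)
next
  case (Suc N)
  then show ?case by (simp add: mfps_yhat_add[OF assms] plus_fun_def)
qed

lemma tuples_eq_0:
  assumes "nn \<in> tuples r ii k" "j < 1 \<or> k < j \<or> r (ii j) < s"
  shows "nn j s = 0"
  using assms(1)[unfolded tuples_def, THEN CollectD, rule_format, OF assms(2)] .

lemma finite_tuples_bounded: "finite {nn \<in> tuples r ii k. \<forall>j s. nn j s \<le> d}"
proof -
  define A where "A = Sigma {1..k} (\<lambda>j. {0..r (ii j)})"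
  have "finite {f. \<forall>p. (p \<in> A \<longrightarrow> f p \<in> {0..d}) \<and> (p \<notin> A \<longrightarrow> f p = (0::nat))}"
    by (rule finite_set_of_finite_funs) (auto simp: A_def)
  then have "finite ((\<lambda>f j s. f (j, s)) ` {f. \<forall>p. (p \<in> A \<longrightarrow> f p \<in> {0..d}) \<and> (p \<notin> A \<longrightarrow> f p = 0)})"
    by blast
  moreover have "{nn \<in> tuples r ii k. \<forall>j s. nn j s \<le> d}
      \<subseteq> (\<lambda>f j s. f (j, s)) ` {f. \<forall>p. (p \<in> A \<longrightarrow> f p \<in> {0..d}) \<and> (p \<notin> A \<longrightarrow> f p = 0)}"
  proof
    fix nn assume "nn \<in> {nn \<in> tuples r ii k. \<forall>j s. nn j s \<le> d}"
    then have "case_prod nn \<in> {f. \<forall>p. (p \<in> A \<longrightarrow> f p \<in> {0..d}) \<and> (p \<notin> A \<longrightarrow> f p = 0)}"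
      by (auto simp: tuples_def A_def not_le)
    then show "nn \<in> (\<lambda>f j s. f (j, s)) ` {f. \<forall>p. (p \<in> A \<longrightarrow> f p \<in> {0..d}) \<and> (p \<notin> A \<longrightarrow> f p = 0)}"
      by (rule rev_image_eqI) simp
  qed
  ultimately show ?thesis by (rule finite_subset[rotated])
qed

lemma bij_betw_tuples_Suc:
  "bij_betw (\<lambda>(v, nn). nn(Suc k := v)) (exponent_tuples (r (ii (Suc k))) \<times> tuples r ii k)
     (tuples r ii (Suc k))"
proof (rule bij_betw_byWitness[where f' = "\<lambda>nn. (nn (Suc k), nn(Suc k := (\<lambda>_. 0)))"])
  show "\<forall>p\<in>exponent_tuples (r (ii (Suc k))) \<times> tuples r ii k.
      (\<lambda>nn. (nn (Suc k), nn(Suc k := (\<lambda>_. 0)))) ((\<lambda>(v, nn). nn(Suc k := v)) p) = p"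
    by (auto simp: tuples_def fun_eq_iff)
  show "\<forall>nn\<in>tuples r ii (Suc k). (\<lambda>(v, nn). nn(Suc k := v)) (nn (Suc k), nn(Suc k := (\<lambda>_. 0))) = nn"
    by auto
  show "(\<lambda>(v, nn). nn(Suc k := v)) ` (exponent_tuples (r (ii (Suc k))) \<times> tuples r ii k)
      \<subseteq> tuples r ii (Suc k)"
    by (auto simp: tuples_def exponent_tuples_def)
  show "(\<lambda>nn. (nn (Suc k), nn(Suc k := (\<lambda>_. 0)))) ` tuples r ii (Suc k)
      \<subseteq> exponent_tuples (r (ii (Suc k))) \<times> tuples r ii k"
    by (auto simp: tuples_def exponent_tuples_def)
qed

lemma tuples_0: "tuples r ii 0 = {\<lambda>_ _. 0}"
  unfolding tuples_def by (auto simp: fun_eq_iff) (metis not_gr0)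

section \<open>The series L_j along a path\<close>

lemma Lfam_eq_Lser: "j \<le> l \<Longrightarrow> Lfam D0 r B ii x xi z l j = Lser D0 r B ii x xi z j"
  by (induction l) (auto simp: Lser_def Let_def le_Suc_eq)

lemma cplus_nonzero:
  assumes "sign_coherent (cvec r B ii j)"
  shows "(\<lambda>m. nat (cplus r B ii j m)) \<noteq> 0"
proof -
  let ?c = "cvec r B ii j"
  obtain q where q: "?c q \<noteq> 0" using assms by (auto simp: sign_coherent_def)
  have "0 < cplus r B ii j q"
  proof (cases "\<forall>m. 0 \<le> ?c m")
    case True
    then show ?thesis using q by (auto simp: cplus_def sgn_vec_def intro: le_neq_trans)
  next
    case False
    then have "?c q < 0" using assms q by (auto simp: sign_coherent_def order.order_iff_strict)
    then show ?thesis using False by (simp add: cplus_def sgn_vec_def)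
  qed
  then show ?thesis by (auto simp: fun_eq_iff intro!: exI[of _ q])
qed

locale L_path =
  fixes D0 :: "'n::finite \<Rightarrow> int" and r :: "'n \<Rightarrow> nat" and B :: "'n \<Rightarrow> 'n \<Rightarrow> int"
    and ii :: "nat \<Rightarrow> 'n" and x xi :: "'n \<Rightarrow> 'a::comm_ring_1" and z :: "'n \<Rightarrow> nat \<Rightarrow> 'a"
  assumes x_unit: "\<forall>j. x j * xi j = 1" and z_0: "\<forall>i. z i 0 = 1"
begin

abbreviation E :: "nat \<Rightarrow> nat \<Rightarrow> int" where
  "E l j \<equiv> Eint D0 r B ii l j"

abbreviation Y :: "('n \<Rightarrow> nat) \<Rightarrow> ('n, 'a) mfps" where
  "Y \<equiv> mfps_yhat B x xi"

abbreviation cpos :: "nat \<Rightarrow> 'n \<Rightarrow> nat" where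
  "cpos j \<equiv> \<lambda>m. nat (cplus r B ii j m)"

definition L :: "nat \<Rightarrow> ('n, 'a) mfps" where
  "L j = Abs_mfps (Lser D0 r B ii x xi z j)"

text \<open>The argument of the polynomial defining L_l (see \<open>Lfam\<close>).\<close>

definition w :: "nat \<Rightarrow> ('n, 'a) mfps" where
  "w l = Y (cpos l) * (\<Prod>j=1..l-1. mfps_powi (L j) (- E l j))"

definition coherent_upto :: "nat \<Rightarrow> bool" where
  "coherent_upto k \<longleftrightarrow> (\<forall>j\<in>{1..k}. sign_coherent (cvec r B ii j))"

lemma ps_prod_upto_powi_Lser:
  assumes "\<forall>j\<in>{1..k}. mfps_nth (L j) 0 = 1"
  shows "ps_prod_upto (\<lambda>j. ps_powi (Lser D0 r B ii x xi z j) (h j)) k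
       = mfps_nth (\<Prod>j=1..k. mfps_powi (L j) (h j))"
  unfolding ps_prod_upto_eq
proof (intro arg_cong[where f = mfps_nth] prod.cong refl)
  fix j assume "j \<in> {1..k}"
  then have "ps_powi (mfps_nth (L j)) (h j) = mfps_nth (mfps_powi (L j) (h j))"
    using assms by (intro ps_powi_eq) auto
  then show "Abs_mfps (ps_powi (Lser D0 r B ii x xi z j) (h j)) = mfps_powi (L j) (h j)"
    by (metis L_def mfps_nth_Abs_mfps mfps_nth_inverse)
qed

lemma L_Suc:
  assumes "\<forall>j\<in>{1..k}. mfps_nth (L j) 0 = 1"
  shows "L (Suc k) = (\<Sum>s=0..r (ii (Suc k)). mfps_const (z (ii (Suc k)) s) * w (Suc k) ^ s)"
proof -
  have "ps_prod_upto (\<lambda>j. ps_powi (Lfam D0 r B ii x xi z k j) (- E (Suc k) j)) k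
      = mfps_nth (\<Prod>j=1..k. mfps_powi (L j) (- E (Suc k) j))"
    using ps_prod_upto_powi_Lser[OF assms]
    by (simp add: Lfam_eq_Lser cong: ps_prod_upto_cong)
  then have "ps_mult (yhat B x xi (cpos (Suc k)))
      (ps_prod_upto (\<lambda>j. ps_powi (Lfam D0 r B ii x xi z k j) (- E (Suc k) j)) k) = mfps_nth (w (Suc k))"
    by (simp add: w_def mfps_nth_mult mfps_yhat_def)
  then show ?thesis
    by (intro mfps_eqI) (simp add: L_def Lser_def Let_def mfps_nth_sum ps_pow_eq mfps_nth_inverse)
qed

lemma mfps_nth_w_0: "sign_coherent (cvec r B ii l) \<Longrightarrow> mfps_nth (w l) 0 = 0"
  by (simp add: w_def mfps_nth_mult_0 mfps_nth_yhat_0 cplus_nonzero)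

lemma mfps_nth_L_0: "coherent_upto k \<Longrightarrow> j \<in> {1..k} \<Longrightarrow> mfps_nth (L j) 0 = 1"
proof (induction k arbitrary: j)
  case 0
  then show ?case by simp
next
  case (Suc k)
  then have IH: "\<forall>i\<in>{1..k}. mfps_nth (L i) 0 = 1"
    by (simp add: coherent_upto_def zero_fun_def[symmetric])
  have "mfps_nth (L (Suc k)) 0 = 1"
  proof -
    have "{0..r (ii (Suc k))} = insert 0 {1..r (ii (Suc k))}" by auto
    moreover have "mfps_nth (w (Suc k)) 0 = 0"
      using Suc.prems by (intro mfps_nth_w_0) (simp add: coherent_upto_def)
    ultimately show ?thesis
      using z_0 by (simp add: L_Suc[OF IH] mfps_nth_sum mfps_nth_power_0 mfps_nth_const mfps_nth_one_apply zero_power)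
  qed
  then show ?case using IH Suc.prems(2) by (cases "j = Suc k") (auto simp: zero_fun_def[symmetric])
qed


definition Lprod :: "nat \<Rightarrow> (nat \<Rightarrow> int) \<Rightarrow> ('n, 'a) mfps" where
  "Lprod k h = (\<Prod>j=1..k. mfps_powi (L j) (h j))"

definition expansion_coeff :: "nat \<Rightarrow> (nat \<Rightarrow> int) \<Rightarrow> (nat \<Rightarrow> nat \<Rightarrow> nat) \<Rightarrow> 'a" where
  "expansion_coeff k h nn = (\<Prod>j=1..k. power_coeff (h j + (\<Sum>l=j+1..k. int (weight (nn l) (r (ii l))) * - E l j))
     (z (ii j)) (r (ii j)) (nn j))"

definition expansion_exponent :: "nat \<Rightarrow> (nat \<Rightarrow> nat \<Rightarrow> nat) \<Rightarrow> 'n \<Rightarrow> nat" where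
  "expansion_exponent k nn = (\<lambda>m. \<Sum>j=1..k. weight (nn j) (r (ii j)) * cpos j m)"

definition expansion_term :: "nat \<Rightarrow> (nat \<Rightarrow> int) \<Rightarrow> (nat \<Rightarrow> nat \<Rightarrow> nat) \<Rightarrow> ('n, 'a) mfps" where
  "expansion_term k h nn = Abs_mfps (rhs_term D0 r B ii x xi z k h nn)"

lemma expansion_term_eq: "expansion_term k h nn = mfps_const (expansion_coeff k h nn) * Y (expansion_exponent k nn)"
proof -
  have weight_sum: "(\<Sum>s=1..r (ii l). int s * int (nn l s) * c) = int (weight (nn l) (r (ii l))) * c"
    for l c
    by (simp add: weight_def sum_distrib_right)
  show ?thesis
    unfolding expansion_term_def rhs_term_def expansion_coeff_def expansion_exponent_def power_coeff_def weight_def[symmetric]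
      weight_sum
    by (intro mfps_eqI) (simp add: mfps_yhat_def)
qed

lemma weight_le_total_deg_expansion_exponent:
  assumes "coherent_upto k" "j \<in> {1..k}"
  shows "weight (nn j) (r (ii j)) \<le> total_deg (expansion_exponent k nn)"
proof -
  obtain q where q: "cpos j q \<noteq> 0"
    using cplus_nonzero assms by (force simp: coherent_upto_def)
  have "weight (nn j) (r (ii j)) \<le> weight (nn j) (r (ii j)) * cpos j q"
    using q by (cases "cpos j q") auto
  also have "\<dots> \<le> expansion_exponent k nn q"
    unfolding expansion_exponent_def using assms(2) by (intro member_le_sum) auto
  also have "\<dots> \<le> total_deg (expansion_exponent k nn)"
    unfolding total_deg_def by (intro member_le_sum) auto
  finally show ?thesis .
qed

lemma tuple_entry_le_total_deg:
  assumes "coherent_upto k" "nn \<in> tuples r ii k" "mfps_nth (expansion_term k h nn) m \<noteq> 0"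
  shows "nn j s \<le> total_deg m"
proof (cases "j \<in> {1..k} \<and> s \<le> r (ii j)")
  case False
  then have "j < 1 \<or> k < j \<or> r (ii j) < s" by auto
  with assms(2) show ?thesis by (simp add: tuples_eq_0)
next
  case True
  have nz: "expansion_coeff k h nn \<noteq> 0" "m = expansion_exponent k nn"
    using assms(3) by (auto simp: expansion_term_eq mfps_yhat_def yhat_def split: if_splits)
  have "power_coeff (h j + (\<Sum>l=j+1..k. int (weight (nn l) (r (ii l))) * - E l j))
      (z (ii j)) (r (ii j)) (nn j) \<noteq> 0"
  proof
    assume "power_coeff (h j + (\<Sum>l=j+1..k. int (weight (nn l) (r (ii l))) * - E l j))
      (z (ii j)) (r (ii j)) (nn j) = 0"
    then have "expansion_coeff k h nn = 0"
      unfolding expansion_coeff_def using True by (intro prod_zero) auto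
    with nz(1) show False ..
  qed
  then have "nn j 0 = (\<Sum>s=1..r (ii j). nn j s)"
    using power_coeff_eq_0 by blast
  then have "nn j s \<le> weight (nn j) (r (ii j))"
    using True by (intro entry_le_weight) auto
  also have "\<dots> \<le> total_deg m"
    using weight_le_total_deg_expansion_exponent[OF assms(1)] True nz(2) by simp
  finally show ?thesis .
qed

lemma mfps_summable_expansion_term:
  assumes "coherent_upto k"
  shows "mfps_summable (tuples r ii k) (expansion_term k h)"
  unfolding mfps_summable_def
proof
  fix m
  have "{nn \<in> tuples r ii k. mfps_nth (expansion_term k h nn) m \<noteq> 0}
      \<subseteq> {nn \<in> tuples r ii k. \<forall>j s. nn j s \<le> total_deg m}"
    using tuple_entry_le_total_deg[OF assms] by blast
  then show "finite {nn \<in> tuples r ii k. mfps_nth (expansion_term k h nn) m \<noteq> 0}"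
    by (rule finite_subset) (rule finite_tuples_bounded)
qed


lemma Lprod_mult_w_power:
  assumes L0: "\<forall>j\<in>{1..k}. mfps_nth (L j) 0 = 1"
  shows "Lprod k h * (mfps_const c * w (Suc k) ^ N)
       = mfps_const c * Y (\<lambda>m. N * cpos (Suc k) m) * Lprod k (\<lambda>j. h j + int N * - E (Suc k) j)"
proof -
  have "(\<Prod>j=1..k. mfps_powi (L j) (- E (Suc k) j)) ^ N = (\<Prod>j=1..k. mfps_powi (L j) (int N * - E (Suc k) j))"
    unfolding prod_power_distrib using L0 by (intro prod.cong refl) (simp add: mfps_powi_power)
  then have w_power: "w (Suc k) ^ N
      = Y (\<lambda>m. N * cpos (Suc k) m) * (\<Prod>j=1..k. mfps_powi (L j) (int N * - E (Suc k) j))"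
    by (simp add: w_def power_mult_distrib mfps_yhat_power[OF x_unit])
  have "Lprod k h * (mfps_const c * w (Suc k) ^ N) = mfps_const c * Y (\<lambda>m. N * cpos (Suc k) m)
      * (Lprod k h * (\<Prod>j=1..k. mfps_powi (L j) (int N * - E (Suc k) j)))"
    unfolding w_power by (simp only: ac_simps)
  also have "Lprod k h * (\<Prod>j=1..k. mfps_powi (L j) (int N * - E (Suc k) j))
      = Lprod k (\<lambda>j. h j + int N * - E (Suc k) j)"
    unfolding Lprod_def prod.distrib[symmetric] using L0 by (intro prod.cong refl) (simp add: mfps_powi_add)
  finally show ?thesis .
qed

lemma expansion_coeff_fun_upd:
  "expansion_coeff (Suc k) h (nn(Suc k := v))
 = expansion_coeff k (\<lambda>j. h j + int (weight v (r (ii (Suc k)))) * - E (Suc k) j) nn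
     * power_coeff (h (Suc k)) (z (ii (Suc k))) (r (ii (Suc k))) v"
proof -
  define F where "F j = power_coeff (h j + (\<Sum>l=j+1..Suc k. int (weight ((nn(Suc k := v)) l) (r (ii l))) * - E l j))
    (z (ii j)) (r (ii j)) ((nn(Suc k := v)) j)" for j
  have "F j = power_coeff (h j + int (weight v (r (ii (Suc k)))) * - E (Suc k) j
      + (\<Sum>l=j+1..k. int (weight (nn l) (r (ii l))) * - E l j)) (z (ii j)) (r (ii j)) (nn j)"
    if "j \<in> {1..k}" for j
    using that by (simp add: F_def algebra_simps)
  then have "prod F {1..k} = expansion_coeff k (\<lambda>j. h j + int (weight v (r (ii (Suc k)))) * - E (Suc k) j) nn"
    unfolding expansion_coeff_def by (rule prod.cong[OF refl])
  moreover have "expansion_coeff (Suc k) h (nn(Suc k := v)) = prod F {1..k} * F (Suc k)"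
    unfolding expansion_coeff_def F_def[symmetric] by (rule prod.cl_ivl_Suc[THEN trans]) simp
  ultimately show ?thesis by (simp add: F_def)
qed

lemma expansion_exponent_fun_upd:
  "expansion_exponent (Suc k) (nn(Suc k := v)) = expansion_exponent k nn + (\<lambda>m. weight v (r (ii (Suc k))) * cpos (Suc k) m)"
  unfolding expansion_exponent_def by (auto simp: fun_eq_iff intro!: sum.cong)

lemma expansion_term_fun_upd:
  "expansion_term (Suc k) h (nn(Suc k := v))
 = mfps_const (power_coeff (h (Suc k)) (z (ii (Suc k))) (r (ii (Suc k))) v)
     * Y (\<lambda>m. weight v (r (ii (Suc k))) * cpos (Suc k) m)
     * expansion_term k (\<lambda>j. h j + int (weight v (r (ii (Suc k)))) * - E (Suc k) j) nn"
  by (simp add: expansion_term_eq expansion_coeff_fun_upd expansion_exponent_fun_upd mfps_const_mult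
      flip: mfps_yhat_add[OF x_unit])

lemma Lprod_Suc:
  assumes "coherent_upto (Suc k)"
  shows "Lprod (Suc k) h = mfps_sum (exponent_tuples (r (ii (Suc k))))
    (\<lambda>v. mfps_const (power_coeff (h (Suc k)) (z (ii (Suc k))) (r (ii (Suc k))) v)
       * Y (\<lambda>m. weight v (r (ii (Suc k))) * cpos (Suc k) m)
       * Lprod k (\<lambda>j. h j + int (weight v (r (ii (Suc k)))) * - E (Suc k) j))"
proof -
  let ?R = "r (ii (Suc k))" and ?zz = "z (ii (Suc k))"
  have L0: "\<forall>j\<in>{1..k}. mfps_nth (L j) 0 = 1"
    using mfps_nth_L_0 assms by (auto simp: coherent_upto_def)
  have W0: "mfps_nth (w (Suc k)) 0 = 0"
    using assms by (intro mfps_nth_w_0) (simp add: coherent_upto_def)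
  have powi: "mfps_powi (L (Suc k)) (h (Suc k))
      = mfps_sum (exponent_tuples ?R) (\<lambda>v. mfps_const (power_coeff (h (Suc k)) ?zz ?R v) * w (Suc k) ^ weight v ?R)"
    unfolding L_Suc[OF L0] by (rule mfps_powi_poly[OF W0]) (simp add: z_0)
  have "Lprod (Suc k) h = Lprod k h * mfps_powi (L (Suc k)) (h (Suc k))"
    by (simp add: Lprod_def)
  also have "\<dots> = mfps_sum (exponent_tuples ?R)
      (\<lambda>v. Lprod k h * (mfps_const (power_coeff (h (Suc k)) ?zz ?R v) * w (Suc k) ^ weight v ?R))"
    unfolding powi by (rule mfps_sum_mult_left[OF mfps_summable_poly_power[OF W0]])
  finally show ?thesis
    by (simp only: Lprod_mult_w_power[OF L0])
qed

lemma Lprod_expansion: "coherent_upto k \<Longrightarrow> Lprod k h = mfps_sum (tuples r ii k) (expansion_term k h)"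
proof (induction k arbitrary: h)
  case 0
  have "expansion_term 0 h (\<lambda>_ _. 0) = 1"
    by (simp add: expansion_term_eq expansion_coeff_def expansion_exponent_def mfps_yhat_0)
  then show ?case by (simp add: tuples_0 mfps_sum_finite Lprod_def)
next
  case (Suc k)
  let ?R = "r (ii (Suc k))"
  have coherent: "coherent_upto k" using Suc.prems by (simp add: coherent_upto_def)
  have summable_pairs: "mfps_summable (exponent_tuples ?R \<times> tuples r ii k)
      (\<lambda>(v, nn). expansion_term (Suc k) h (nn(Suc k := v)))"
    by (rule iffD2[OF mfps_summable_reindex_bij_betw[where F = "expansion_term (Suc k) h", OF bij_betw_tuples_Suc]])
       (simp_all add: split_beta mfps_summable_expansion_term[OF Suc.prems])
  have "Lprod (Suc k) h = mfps_sum (exponent_tuples ?R)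
      (\<lambda>v. mfps_sum (tuples r ii k) (\<lambda>nn. expansion_term (Suc k) h (nn(Suc k := v))))"
    unfolding Lprod_Suc[OF Suc.prems] Suc.IH[OF coherent] expansion_term_fun_upd
      mfps_sum_mult_left[OF mfps_summable_expansion_term[OF coherent]] ..
  also have "\<dots> = mfps_sum (exponent_tuples ?R \<times> tuples r ii k) (\<lambda>(v, nn). expansion_term (Suc k) h (nn(Suc k := v)))"
    by (rule mfps_sum_Sigma[OF summable_pairs, symmetric])
  also have "\<dots> = mfps_sum (tuples r ii (Suc k)) (expansion_term (Suc k) h)"
    by (rule mfps_sum_reindex_bij_betw[OF bij_betw_tuples_Suc]) auto
  finally show ?case .
qed

end

theorem lemmaL4:
  fixes r :: "'n::finite \<Rightarrow> nat"
    and B :: "'n \<Rightarrow> 'n \<Rightarrow> int"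
    and D0 :: "'n \<Rightarrow> int"
    and x xi :: "'n \<Rightarrow> 'a::comm_ring_1"
    and z :: "'n \<Rightarrow> nat \<Rightarrow> 'a"
    and ii :: "nat \<Rightarrow> 'n"
    and k :: nat
    and h :: "nat \<Rightarrow> int"
  assumes r_pos: "\<forall>i. 0 < r i"
    and D0_pos: "\<forall>i. 0 < D0 i"
    and D0RB_skew: "\<forall>i j. D0 i * int (r i) * B i j = - (D0 j * int (r j) * B j i)"
    and x_unit: "\<forall>j. x j * xi j = 1"
    and z_ends: "\<forall>i. z i 0 = 1 \<and> z i (r i) = 1"
    and z_sym: "\<forall>i s. s \<le> r i \<longrightarrow> z i s = z i (r i - s)"
    and path: "\<forall>j. 1 \<le> j \<and> j < k \<longrightarrow> ii j \<noteq> ii (Suc j)"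
    and sign_coh: "\<forall>j. 1 \<le> j \<and> j \<le> k \<longrightarrow> sign_coherent (cvec r B ii j)"
    and pair_int: "\<forall>l j. 1 \<le> j \<and> j < l \<and> l \<le> k \<longrightarrow> Qpair D0 r B ii l j \<in> \<int>"
  shows "(\<forall>mm. finite {nn \<in> tuples r ii k. rhs_term D0 r B ii x xi z k h nn mm \<noteq> 0})
       \<and> ps_prod_upto (\<lambda>j. ps_powi (Lser D0 r B ii x xi z j) (h j)) k
         = (\<lambda>mm. Sum_any (\<lambda>nn. if nn \<in> tuples r ii k
                                  then rhs_term D0 r B ii x xi z k h nn mm else 0))"
proof -
  interpret L_path D0 r B ii x xi z
    using x_unit z_ends by unfold_locales auto
  have coherent: "coherent_upto k"
    using sign_coh by (simp add: coherent_upto_def)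
  have "ps_prod_upto (\<lambda>j. ps_powi (Lser D0 r B ii x xi z j) (h j)) k = mfps_nth (Lprod k h)"
    using ps_prod_upto_powi_Lser mfps_nth_L_0[OF coherent] by (simp add: Lprod_def)
  also have "\<dots> = mfps_nth (mfps_sum (tuples r ii k) (expansion_term k h))"
    by (simp only: Lprod_expansion[OF coherent])
  finally show ?thesis
    using mfps_summable_expansion_term[OF coherent]
    by (simp add: fun_eq_iff mfps_nth_mfps_sum_Sum_any mfps_summable_def expansion_term_def cong: if_cong)
qed

end
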